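(* Let $f:\{0,1,\dots,N-1\}\to\{0,1\}$, $t=|f^{-1}(1)|$, and $0<\varepsilon\le1$. The algorithm $\mathbf{Approx\_Count}(f,\varepsilon)$ outputs an integer $\tilde t$ with $|\tilde t-t|\le\varepsilon t$ with probability at least $2/3$, using an expected number of evaluations of $f$ in $\Theta\big(\frac1\varepsilon\sqrt{N/t}\big)$ when $t>0$. If $t=0$, it outputs $\tilde t=0$ with certainty and uses a number of evaluations of $f$ in $\Theta(\sqrt N)$.
   Context: For $M\ge1$, $\mathbf F_M|x\rangle=\frac{1}{\sqrt M}\sum_{y=0}^{M-1}e^{2\pi ixy/M}|y\rangle$. For a unitary $\mathbf U$, $\Lambda_M(\mathbf U)$ is $|j\rangle|y\rangle\mapsto|j\rangle(\mathbf U^j|y\rangle)$, $0\le j<M$. With $\mathcal A=\mathbf F_N$ on basis $|0\rangle,\dots,|N-1\rangle$, $\mathbf S_f|x\rangle=(-1)^{f(x)}|x\rangle$, $\mathbf S_0$ negating $|0\rangle$ and fixing other basis states, and $\mathbf Q=-\mathcal A\mathbf S_0\mathcal A^{-1}\mathbf S_f$: $\mathbf{Count}(f,M)$ prepares $|0\rangle\otimes\mathcal A|0\rangle$ (first register $M$-dimensional), applies $\mathbf F_M$ to the first register, then $\Lambda_M(\mathbf Q)$, then $\mathbf F_M^{-1}$ to the first register, measures the first register obtaining $y$, and outputs $N\sin^2(\pi y/M)$; a call $\mathbf{Count}(f,M)$ is counted as $M$ evaluations of $f$. Algorithm $\mathbf{Approx\_Count}(f,\varepsilon)$: (1) set $\ell=0$;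 (2) increase $\ell$ by 1; (3) set $t'=\mathbf{Count}(f,2^\ell)$; (4) if $t'=0$ and $2^\ell<2\sqrt N$, go to step (2); (5) set $M=\lceil\frac{20\pi^2}{\varepsilon}2^\ell\rceil$; (6) set $t'=\mathbf{Count}(f,M)$; (7) output an integer $\tilde t$ with $|\tilde t-t'|\le 2/3$. *)

theory Defs
  imports "HOL-Probability.Probability"
begin

text \<open>Vectors of a d-dimensional register are functions nat => complex, only the
  entries below d being meaningful.  Operators map such vectors to vectors.\<close>

definition qft :: "nat \<Rightarrow> (nat \<Rightarrow> complex) \<Rightarrow> nat \<Rightarrow> complex" where
  "qft M v = (\<lambda>y. if y < M then
      (\<Sum>x<M. cis (2 * pi * real x * real y / real M) / complex_of_real (sqrt (real M)) * v x)
    else 0)"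

definition inv_qft :: "nat \<Rightarrow> (nat \<Rightarrow> complex) \<Rightarrow> nat \<Rightarrow> complex" where
  "inv_qft M v = (\<lambda>y. if y < M then
      (\<Sum>x<M. cis (- 2 * pi * real x * real y / real M) / complex_of_real (sqrt (real M)) * v x)
    else 0)"

definition ket0 :: "nat \<Rightarrow> complex" where
  "ket0 = (\<lambda>x. if x = 0 then 1 else 0)"

definition S_f :: "(nat \<Rightarrow> bool) \<Rightarrow> (nat \<Rightarrow> complex) \<Rightarrow> nat \<Rightarrow> complex" where
  "S_f f v = (\<lambda>x. if f x then - v x else v x)"

definition S_0 :: "(nat \<Rightarrow> complex) \<Rightarrow> nat \<Rightarrow> complex" where
  "S_0 v = (\<lambda>x. if x = 0 then - v x else v x)"

definition Q_op :: "(nat \<Rightarrow> bool) \<Rightarrow> nat \<Rightarrow> (nat \<Rightarrow> complex) \<Rightarrow> nat \<Rightarrow> complex" where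
  "Q_op f N v = (\<lambda>y. - qft N (S_0 (inv_qft N (S_f f v))) y)"

text \<open>Final state of Count(f,M) before measurement, as amplitude of |j>|y>
  (j in the M-dimensional first register, y in the N-dimensional second register).\<close>
definition count_state :: "(nat \<Rightarrow> bool) \<Rightarrow> nat \<Rightarrow> nat \<Rightarrow> nat \<Rightarrow> nat \<Rightarrow> complex" where
  "count_state f N M =
    (let psi0 = (\<lambda>j y. if j = 0 then qft N ket0 y else 0);
         psi1 = (\<lambda>j y. qft M (\<lambda>j'. psi0 j' y) j);
         psi2 = (\<lambda>j y. if j < M then ((Q_op f N) ^^ j) (psi1 j) y else 0);
         psi3 = (\<lambda>j y. inv_qft M (\<lambda>j'. psi2 j' y) j)
     in psi3)"

definition count_prob :: "(nat \<Rightarrow> bool) \<Rightarrow> nat \<Rightarrow> nat \<Rightarrow> nat \<Rightarrow> real" where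
  "count_prob f N M y' = (if y' < M then (\<Sum>y<N. (cmod (count_state f N M y' y))\<^sup>2) else 0)"

definition count_pmf :: "(nat \<Rightarrow> bool) \<Rightarrow> nat \<Rightarrow> nat \<Rightarrow> nat pmf" where
  "count_pmf f N M = embed_pmf (count_prob f N M)"

definition count_est :: "nat \<Rightarrow> nat \<Rightarrow> nat \<Rightarrow> real" where
  "count_est N M y = real N * (sin (pi * real y / real M))\<^sup>2"

lemma ac_loop_termination_aux:
  assumes "(2::real) ^ l < 2 * sqrt (real N)"
  shows "l < N"
proof (rule ccontr)
  assume "\<not> l < N"
  hence lN: "N \<le> l" by simp
  have "real l + 1 \<le> 2 ^ l"
  proof -
    have "l + 1 \<le> (2::nat) ^ l" by (induction l) auto
    hence "real (l + 1) \<le> real ((2::nat) ^ l)" by linarith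
    thus ?thesis by simp
  qed
  hence "real l + 1 < 2 * sqrt (real N)" using assms by linarith
  hence "(real l + 1)^2 < (2 * sqrt (real N))^2"
    by (intro power_strict_mono) auto
  hence "(real l + 1)^2 < 4 * real N" by (simp add: power_mult_distrib)
  moreover have "4 * real N \<le> (real l + 1)^2"
  proof -
    have "real N \<le> real l" using lN by simp
    hence "4 * real N \<le> 4 * real l" by simp
    also have "\<dots> \<le> (real l + 1)^2" 
    proof -
      have "0 \<le> (real l - 1)^2" by simp
      thus ?thesis by (simp add: power2_eq_square algebra_simps)
    qed
    finally show ?thesis .
  qed
  ultimately show False by linarith
qed

text \<open>Steps (2)-(4) of Approx_Count, started with the current value of l (after
  the increment); returns the value of l when the loop is left.\<close>
function ac_loop :: "(nat \<Rightarrow> bool) \<Rightarrow> nat \<Rightarrow> nat \<Rightarrow> nat pmf" where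
  "ac_loop f N l =
     bind_pmf (count_pmf f N (2 ^ l)) (\<lambda>y.
       if count_est N (2 ^ l) y = 0 \<and> (2::real) ^ l < 2 * sqrt (real N)
       then ac_loop f N (Suc l) else return_pmf l)"
  by auto
termination
  by (relation "Wellfounded.measure (\<lambda>(f, N, l). N - l)")
     (auto dest!: ac_loop_termination_aux)

text \<open>Approx_Count(f,eps) on the domain {0..N-1}: returns the triple (l, M, y) where l is
  the final value of l, M the modulus of step (5) and y the outcome of Count(f,M) in
  step (6).  Then t' = count_est N M y, and the final output is any integer within 2/3 of t'.\<close>
definition approx_count :: "(nat \<Rightarrow> bool) \<Rightarrow> nat \<Rightarrow> real \<Rightarrow> (nat \<times> nat \<times> nat) pmf" where
  "approx_count f N \<epsilon> =
     bind_pmf (ac_loop f N 1) (\<lambda>l.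
       let M = nat \<lceil>20 * pi\<^sup>2 / \<epsilon> * 2 ^ l\<rceil> in
       bind_pmf (count_pmf f N M) (\<lambda>y. return_pmf (l, M, y)))"

text \<open>Number of evaluations of f: calls Count(f,2^k), k = 1..l, and Count(f,M).\<close>
definition ac_evals :: "nat \<times> nat \<times> nat \<Rightarrow> nat" where
  "ac_evals r = (case r of (l, M, y) \<Rightarrow> (\<Sum>k\<in>{1..l}. 2 ^ k) + M)"

definition num_sol :: "(nat \<Rightarrow> bool) \<Rightarrow> nat \<Rightarrow> nat" where
  "num_sol f N = card {x. x < N \<and> f x}"

end

theory Submission
  imports Defs
begin

text \<open>With \<open>sin\<^sup>2 \<theta> = t / N\<close>, the Grover iterate \<open>Q\<close> rotates the uniform state by \<open>2 \<theta>\<close> in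
  the plane spanned by the uniform superpositions of solutions and of non-solutions. Hence the
  state measured by \<open>Count(f, M)\<close> is a pair of Dirichlet kernels, and the outcome \<open>y\<close> is one of
  the two integers nearest to \<open>M \<theta> / \<pi>\<close> or to its mirror image with probability at least
  \<open>7/10\<close>. For such \<open>y\<close> the estimate \<open>N sin\<^sup>2 (\<pi> y / M)\<close> has relative error at most \<open>\<epsilon>/3\<close> as
  soon as \<open>M \<theta> \<ge> 5 \<pi>\<^sup>2 / \<epsilon>\<close>, and rounding keeps it within \<open>\<epsilon> t\<close>.

  The doubling loop stops at \<open>2\<^sup>l\<close> with probability \<open>1 - p\<^sub>0\<close>, where the probability \<open>p\<^sub>0\<close> of
  the outcome \<open>0\<close> is at least \<open>1 - (2\<^sup>l \<theta>)\<^sup>2 / 3\<close> and at most \<open>1 / (2\<^sup>l sin \<theta>)\<^sup>2\<close>. So it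
  stops with \<open>2\<^sup>l \<theta> < 1/4\<close> only with probability at most \<open>1/36\<close>, and otherwise the final \<open>M\<close>
  is large enough. Moreover \<open>E[2\<^sup>l] = O(1 / sin \<theta>) = O(\<surd>(N/t))\<close> while \<open>2\<^sup>l \<theta> \<ge> 1\<close> with
  probability at least \<open>5/9\<close>; as the cost is dominated by \<open>M \<approx> 20 \<pi>\<^sup>2 2\<^sup>l / \<epsilon>\<close>, its
  expectation is \<open>\<Theta>(\<surd>(N/t) / \<epsilon>)\<close>. If \<open>t = 0\<close>, then \<open>\<theta> = 0\<close>, every call of \<open>Count\<close> returns
  \<open>0\<close>, and the loop runs until \<open>2\<^sup>l \<ge> 2 \<surd>N\<close>.\<close>

section \<open>Elementary inequalities\<close>

lemma multiple_eq_0_if_abs_less: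
  fixes d i :: int
  assumes "d = i * m" "\<bar>d\<bar> < m"
  shows "d = 0"
proof (rule ccontr)
  assume "d \<noteq> 0"
  with assms(1) have "1 \<le> \<bar>i\<bar>" "0 \<le> m" using assms(2) by auto
  then have "m \<le> \<bar>i\<bar> * m" by (simp add: mult_le_cancel_right1)
  with assms \<open>0 \<le> m\<close> show False by (simp add: abs_mult)
qed

lemma square_mult_divide: "(x::real)\<^sup>2 * (a / x) = x * a"
  by (cases "x = 0") (simp_all add: power2_eq_square)

lemma sin_ge_cubic:
  fixes x :: real
  assumes "0 \<le> x"
  shows "x - x ^ 3 / 6 \<le> sin x"
proof -
  obtain t where t: "sin x = (\<Sum>m<3. sin_coeff m * x ^ m) + sin (t + 1 / 2 * real 3 * pi) / fact 3 * x ^ 3"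
    using Maclaurin_sin_expansion[of x 3] by blast
  have "(\<Sum>m<3. sin_coeff m * x ^ m) = x"
    by (simp add: sin_coeff_def numeral_3_eq_3)
  moreover have "- (x ^ 3) \<le> sin (t + 1 / 2 * real 3 * pi) * x ^ 3"
    using assms by (metis mult_minus_left mult_right_mono mult_1 zero_le_power sin_ge_minus_one)
  ultimately show ?thesis unfolding t by (simp add: fact_numeral)
qed

lemma cos_ge_quadratic:
  fixes x :: real
  shows "1 - x\<^sup>2 / 2 \<le> cos x"
proof -
  have "\<bar>sin (x / 2)\<bar> \<le> \<bar>x / 2\<bar>" by (rule abs_sin_x_le_abs_x)
  then have "(sin (x / 2))\<^sup>2 \<le> (x / 2)\<^sup>2" by (metis abs_le_square_iff)
  then show ?thesis using cos_double_sin[of "x / 2"] by (simp add: power_divide)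
qed

lemma pi_sq_le: "pi\<^sup>2 \<le> 3.1416\<^sup>2"
  using pi_approx(2) by (intro power_mono) auto

lemma nine_le_pi_sq: "9 \<le> pi\<^sup>2"
proof -
  have "3 * 3 \<le> pi * pi" using pi_gt3 by (intro mult_mono) auto
  then show ?thesis by (simp add: power2_eq_square)
qed

lemma half_le_sin:
  assumes "0 \<le> x" "x \<le> pi / 2"
  shows "x / 2 \<le> sin x"
proof -
  have "x\<^sup>2 \<le> (pi / 2)\<^sup>2" using assms by (intro power_mono) auto
  also have "\<dots> \<le> 3" using pi_sq_le by (simp add: power_divide)
  finally have "x / 2 \<le> x - x ^ 3 / 6" using assms(1)
    by (simp add: power2_eq_square power3_eq_cube field_simps mult_left_mono)
  also have "\<dots> \<le> sin x" using sin_ge_cubic assms by simp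
  finally show ?thesis .
qed

lemma sin_sq_diff_sin_sq:
  fixes a b :: real
  shows "(sin a)\<^sup>2 - (sin b)\<^sup>2 = sin (a - b) * sin (a + b)"
proof -
  have "sin (a - b) * sin (a + b) = (sin a * cos b)\<^sup>2 - (cos a * sin b)\<^sup>2"
    by (simp add: sin_diff sin_add power2_eq_square algebra_simps)
  also have "\<dots> = (sin a)\<^sup>2 * (1 - (sin b)\<^sup>2) - (1 - (sin a)\<^sup>2) * (sin b)\<^sup>2"
    by (simp add: power_mult_distrib cos_squared_eq)
  finally show ?thesis by (simp add: algebra_simps)
qed

lemma scaled_sin_sq_relative_error:
  fixes n \<theta> a \<kappa> \<epsilon> :: real
  assumes n: "0 \<le> n" and \<theta>: "0 \<le> \<theta>" "\<theta> \<le> pi / 2" and \<kappa>: "0 \<le> \<kappa>"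
    and a: "\<bar>a - \<theta>\<bar> \<le> \<kappa> * sin \<theta>" and \<kappa>\<epsilon>: "\<kappa> * (2 + \<kappa>) \<le> \<epsilon> / 3"
  shows "\<bar>n * (sin a)\<^sup>2 - n * (sin \<theta>)\<^sup>2\<bar> \<le> \<epsilon> * (n * (sin \<theta>)\<^sup>2) / 3"
proof -
  define s where "s = sin \<theta>"
  have s0: "0 \<le> s" using \<theta> by (simp add: s_def sin_ge_zero)
  have c0: "0 \<le> cos \<theta>" using \<theta> by (intro cos_ge_zero) auto
  have d: "\<bar>sin (a - \<theta>)\<bar> \<le> \<kappa> * s"
    using abs_sin_x_le_abs_x[of "a - \<theta>"] a by (simp add: s_def)
  have "sin (a + \<theta>) = sin (2 * \<theta> + (a - \<theta>))" by (simp add: algebra_simps)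
  also have "\<dots> = sin (2 * \<theta>) * cos (a - \<theta>) + cos (2 * \<theta>) * sin (a - \<theta>)" by (rule sin_add)
  finally have "\<bar>sin (a + \<theta>)\<bar> \<le> \<bar>sin (2 * \<theta>)\<bar> * \<bar>cos (a - \<theta>)\<bar> + \<bar>cos (2 * \<theta>)\<bar> * \<bar>sin (a - \<theta>)\<bar>"
    by (simp add: abs_mult[symmetric] abs_triangle_ineq)
  also have "\<dots> \<le> \<bar>sin (2 * \<theta>)\<bar> + \<bar>sin (a - \<theta>)\<bar>"
    using mult_left_le[OF abs_cos_le_one[of "a - \<theta>"], of "\<bar>sin (2 * \<theta>)\<bar>"]
      mult_left_le_one_le[of "\<bar>sin (a - \<theta>)\<bar>" "\<bar>cos (2 * \<theta>)\<bar>"] by simp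
  also have "\<bar>sin (2 * \<theta>)\<bar> \<le> 2 * s"
    using s0 c0 mult_left_le[OF cos_le_one[of \<theta>], of "2 * s"] by (simp add: s_def sin_double abs_mult)
  finally have e: "\<bar>sin (a + \<theta>)\<bar> \<le> 2 * s + \<kappa> * s" using d by linarith
  have "\<bar>(sin a)\<^sup>2 - (sin \<theta>)\<^sup>2\<bar> = \<bar>sin (a - \<theta>)\<bar> * \<bar>sin (a + \<theta>)\<bar>"
    by (simp add: sin_sq_diff_sin_sq abs_mult)
  also have "\<dots> \<le> (\<kappa> * s) * (2 * s + \<kappa> * s)" using d e by (intro mult_mono) auto
  also have "\<dots> = (\<kappa> * (2 + \<kappa>)) * s\<^sup>2" by (simp add: power2_eq_square algebra_simps)
  also have "\<dots> \<le> \<epsilon> / 3 * s\<^sup>2" using \<kappa>\<epsilon> by (intro mult_right_mono) auto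
  finally have "n * \<bar>(sin a)\<^sup>2 - (sin \<theta>)\<^sup>2\<bar> \<le> n * (\<epsilon> / 3 * s\<^sup>2)" using n by (intro mult_left_mono)
  moreover have "\<bar>n * (sin a)\<^sup>2 - n * (sin \<theta>)\<^sup>2\<bar> = n * \<bar>(sin a)\<^sup>2 - (sin \<theta>)\<^sup>2\<bar>"
    using n by (simp add: right_diff_distrib[symmetric] abs_mult)
  ultimately show ?thesis by (simp add: s_def mult_ac)
qed

lemma rounding_within_relative_error:
  fixes r :: int and t e \<epsilon> :: real
  assumes t: "t \<in> \<int>" and r: "\<bar>real_of_int r - e\<bar> \<le> 2/3" and e: "\<bar>e - t\<bar> \<le> \<epsilon> * t / 3"
    and "0 \<le> \<epsilon> * t"
  shows "\<bar>real_of_int r - t\<bar> \<le> \<epsilon> * t"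
proof (cases "1 \<le> \<epsilon> * t")
  case False
  obtain i where i: "t = of_int i" using t by (auto elim: Ints_cases)
  have "\<bar>real_of_int r - t\<bar> < 1" using r e False by linarith
  then have "r = i" unfolding i by linarith
  then show ?thesis using assms(4) i by simp
qed (use r e in linarith)

text \<open>\<open>(sin (\<pi> d))\<^sup>2 (1 / d\<^sup>2 + 1 / (1 - d)\<^sup>2) / \<pi>\<^sup>2\<close> is the mass that a Fejer kernel centred at
  distance \<open>d\<close> from a grid point puts on the two nearest grid points. Its minimum is
  \<open>8/\<pi>\<^sup>2 \<approx> 0.81\<close>, at \<open>d = 1/2\<close>; the weaker bound \<open>7/10\<close> can be checked on finitely many
  intervals, using monotonicity of each factor there and a rational upper bound for \<open>\<pi>\<close>.\<close>
lemma sinc_sq_pair_ge_on_interval: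
  fixes a b s d :: real
  assumes "0 < a" "a \<le> d" "d \<le> b" "b \<le> 1/2" "0 \<le> s" "s \<le> 1 - 3.1416\<^sup>2 * (1/2 - a)\<^sup>2 / 2"
    "7/10 * 3.1416\<^sup>2 \<le> s\<^sup>2 * (1 / b\<^sup>2 + 1 / (1 - a)\<^sup>2)"
  shows "7/10 * pi\<^sup>2 \<le> (sin (pi * d))\<^sup>2 * (1 / d\<^sup>2 + 1 / (1 - d)\<^sup>2)"
proof -
  have "(pi * (1/2 - d))\<^sup>2 \<le> (3.1416 * (1/2 - a))\<^sup>2"
    using assms pi_approx(2) by (intro power_mono mult_mono) auto
  also have "\<dots> = 3.1416\<^sup>2 * (1/2 - a)\<^sup>2" by (rule power_mult_distrib)
  finally have "s \<le> 1 - (pi * (1/2 - d))\<^sup>2 / 2" using assms(6) by linarith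
  also have "\<dots> \<le> cos (pi * (1/2 - d))" by (rule cos_ge_quadratic)
  also have "cos (pi * (1/2 - d)) = sin (pi * d)" by (simp add: sin_cos_eq algebra_simps)
  finally have "s\<^sup>2 \<le> (sin (pi * d))\<^sup>2" using assms(5) by (intro power_mono) auto
  moreover have "1 / b\<^sup>2 \<le> 1 / d\<^sup>2" "1 / (1 - a)\<^sup>2 \<le> 1 / (1 - d)\<^sup>2"
    using assms by (auto intro!: divide_left_mono power_mono mult_pos_pos)
  moreover have "7/10 * pi\<^sup>2 \<le> 7/10 * 3.1416\<^sup>2" using pi_sq_le by simp
  ultimately show ?thesis
    using assms(7) by (smt (verit) add_mono mult_mono zero_le_power2 divide_nonneg_nonneg)
qed

lemma sinc_sq_pair_ge_half:
  fixes d :: real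
  assumes "0 < d" "d \<le> 1/2"
  shows "7/10 * pi\<^sup>2 \<le> (sin (pi * d))\<^sup>2 * (1 / d\<^sup>2 + 1 / (1 - d)\<^sup>2)"
proof -
  consider "d \<le> 0.3" | "0.3 \<le> d" "d \<le> 0.33" | "0.33 \<le> d" "d \<le> 0.36" | "0.36 \<le> d" "d \<le> 0.4"
    | "0.4 \<le> d" "d \<le> 0.45" | "0.45 \<le> d" by linarith
  then show ?thesis
  proof cases
    case 1
    have "(pi * d)\<^sup>2 \<le> (3.1416 * (3/10))\<^sup>2"
      using 1 assms pi_approx(2) by (intro power_mono mult_mono) auto
    also have "\<dots> \<le> 9/10" by (simp add: power2_eq_square)
    finally have "17/20 \<le> 1 - (pi * d)\<^sup>2 / 6" by simp
    then have "pi * d * (17/20) \<le> pi * d * (1 - (pi * d)\<^sup>2 / 6)"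
      using assms by (intro mult_left_mono) auto
    also have "\<dots> = pi * d - (pi * d) ^ 3 / 6" by (simp add: power2_eq_square power3_eq_cube algebra_simps)
    also have "\<dots> \<le> sin (pi * d)" using assms by (intro sin_ge_cubic) simp
    finally have "(pi * d * (17/20))\<^sup>2 / d\<^sup>2 \<le> (sin (pi * d))\<^sup>2 / d\<^sup>2"
      using assms by (intro divide_right_mono power_mono) auto
    moreover have "(pi * d * (17/20))\<^sup>2 / d\<^sup>2 = 289/400 * pi\<^sup>2"
      using assms by (simp add: field_simps power2_eq_square)
    moreover have "0 \<le> (sin (pi * d))\<^sup>2 * (1 / (1 - d)\<^sup>2)" "0 \<le> pi\<^sup>2" by simp_all
    moreover have "(sin (pi * d))\<^sup>2 * (1 / d\<^sup>2 + 1 / (1 - d)\<^sup>2)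
        = (sin (pi * d))\<^sup>2 / d\<^sup>2 + (sin (pi * d))\<^sup>2 * (1 / (1 - d)\<^sup>2)"
      by (simp add: distrib_left)
    ultimately show ?thesis by linarith
  next
    case 2 then show ?thesis
      by (intro sinc_sq_pair_ge_on_interval[where a="0.3" and b="0.33" and s="0.8"])
        (use assms in \<open>auto simp: power2_eq_square\<close>)
  next
    case 3 then show ?thesis
      by (intro sinc_sq_pair_ge_on_interval[where a="0.33" and b="0.36" and s="0.85"])
        (use assms in \<open>auto simp: power2_eq_square\<close>)
  next
    case 4 then show ?thesis
      by (intro sinc_sq_pair_ge_on_interval[where a="0.36" and b="0.4" and s="0.9"])
        (use assms in \<open>auto simp: power2_eq_square\<close>)
  next
    case 5 then show ?thesis
      by (intro sinc_sq_pair_ge_on_interval[where a="0.4" and b="0.45" and s="0.95"])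
        (use assms in \<open>auto simp: power2_eq_square\<close>)
  next
    case 6 then show ?thesis
      by (intro sinc_sq_pair_ge_on_interval[where a="0.45" and b="0.5" and s="0.98"])
        (use assms in \<open>auto simp: power2_eq_square\<close>)
  qed
qed

lemma sinc_sq_pair_ge:
  fixes d :: real
  assumes "0 < d" "d < 1"
  shows "7/10 \<le> (sin (pi * d))\<^sup>2 / (pi\<^sup>2 * d\<^sup>2) + (sin (pi * d))\<^sup>2 / (pi\<^sup>2 * (1 - d)\<^sup>2)"
proof -
  have "7/10 * pi\<^sup>2 \<le> (sin (pi * d))\<^sup>2 * (1 / d\<^sup>2 + 1 / (1 - d)\<^sup>2)"
  proof (cases "d \<le> 1/2")
    case False
    have "7/10 * pi\<^sup>2 \<le> (sin (pi * (1 - d)))\<^sup>2 * (1 / (1 - d)\<^sup>2 + 1 / (1 - (1 - d))\<^sup>2)"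
      using False assms by (intro sinc_sq_pair_ge_half) auto
    also have "sin (pi * (1 - d)) = sin (pi * d)" by (simp add: right_diff_distrib sin_diff)
    finally show ?thesis by (simp add: algebra_simps)
  qed (use sinc_sq_pair_ge_half assms in simp)
  moreover have "(sin (pi * d))\<^sup>2 / (pi\<^sup>2 * d\<^sup>2) + (sin (pi * d))\<^sup>2 / (pi\<^sup>2 * (1 - d)\<^sup>2)
      = (sin (pi * d))\<^sup>2 * (1 / d\<^sup>2 + 1 / (1 - d)\<^sup>2) / pi\<^sup>2"
    using assms by (simp add: field_simps)
  ultimately show ?thesis by (simp add: pos_le_divide_eq)
qed

section \<open>Finitely supported distributions\<close>

lemma expectation_bind_pmf_finite:
  fixes h :: "'b \<Rightarrow> real"
  assumes "finite (set_pmf p)" "\<And>x. finite (set_pmf (g x))"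
  shows "measure_pmf.expectation (bind_pmf p g) h
    = measure_pmf.expectation p (\<lambda>x. measure_pmf.expectation (g x) h)"
proof -
  have "measure_pmf.expectation (bind_pmf p g) h
      = (\<Sum>a\<in>set_pmf p. pmf p a *\<^sub>R measure_pmf.expectation (g a) h)"
    using assms by (intro pmf_expectation_bind) auto
  also have "\<dots> = measure_pmf.expectation p (\<lambda>x. measure_pmf.expectation (g x) h)"
    using assms by (subst integral_measure_pmf[of "set_pmf p"]) auto
  finally show ?thesis .
qed

lemma prob_bind_pmf_finite:
  assumes "finite (set_pmf p)" "\<And>x. finite (set_pmf (g x))"
  shows "measure_pmf.prob (bind_pmf p g) S = measure_pmf.expectation p (\<lambda>x. measure_pmf.prob (g x) S)"
  using expectation_bind_pmf_finite[OF assms, where h = "indicator S"] by simp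

lemma mult_prob_compl_le_expectation:
  fixes p :: "'a pmf" and h :: "'a \<Rightarrow> real"
  assumes "finite (set_pmf p)" "\<And>x. a * (1 - indicator B x) \<le> h x"
  shows "a * (1 - measure_pmf.prob p B) \<le> measure_pmf.expectation p h"
proof -
  have int: "integrable (measure_pmf p) g" for g :: "'a \<Rightarrow> real"
    using assms(1) by (rule integrable_measure_pmf_finite)
  have "a * (1 - measure_pmf.prob p B) = measure_pmf.expectation p (\<lambda>x. a * (1 - indicator B x))"
    using int by (simp add: integral_diff)
  also have "\<dots> \<le> measure_pmf.expectation p h"
    using assms(2) by (intro integral_mono int) auto
  finally show ?thesis .
qed

section \<open>Dirichlet sums\<close>

definition dirichlet_sum :: "nat \<Rightarrow> real \<Rightarrow> complex" where
  "dirichlet_sum M \<phi> = (\<Sum>j<M. cis (real j * \<phi>))"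

lemma dirichlet_sum_mult_cis_minus_1:
  "dirichlet_sum M \<phi> * (cis \<phi> - 1) = cis (real M * \<phi>) - 1"
proof (induction M)
  case (Suc M)
  have "dirichlet_sum (Suc M) \<phi> = dirichlet_sum M \<phi> + cis (real M * \<phi>)"
    by (simp add: dirichlet_sum_def)
  then have "dirichlet_sum (Suc M) \<phi> * (cis \<phi> - 1)
      = dirichlet_sum M \<phi> * (cis \<phi> - 1) + cis (real M * \<phi>) * cis \<phi> - cis (real M * \<phi>)"
    by (simp add: algebra_simps)
  also have "\<dots> = cis (real (Suc M) * \<phi>) - 1"
    using Suc by (simp add: cis_mult algebra_simps)
  finally show ?case .
qed (simp add: dirichlet_sum_def)

lemma norm_cis_minus_1: "cmod (cis a - 1) = 2 * \<bar>sin (a / 2)\<bar>"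
proof -
  have "(cmod (cis a - 1))\<^sup>2 = (cos a - 1)\<^sup>2 + (sin a)\<^sup>2"
    by (simp add: cmod_def cis.code)
  also have "\<dots> = 2 - 2 * cos a"
    using sin_cos_squared_add[of a] by (simp add: power2_eq_square algebra_simps)
  also have "\<dots> = (2 * \<bar>sin (a / 2)\<bar>)\<^sup>2"
    using cos_double_sin[of "a / 2"] by (simp add: power_mult_distrib)
  finally show ?thesis
    by (metis abs_of_nonneg norm_ge_zero power2_eq_iff_nonneg zero_le_mult_iff abs_ge_zero zero_le_numeral)
qed

lemma norm_dirichlet_sum_mult_sin:
  "cmod (dirichlet_sum M \<phi>) * \<bar>sin (\<phi> / 2)\<bar> = \<bar>sin (real M * \<phi> / 2)\<bar>"
  using arg_cong[OF dirichlet_sum_mult_cis_minus_1[of M \<phi>], of cmod]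
  by (simp add: norm_mult norm_cis_minus_1)

lemma dirichlet_sum_0 [simp]: "dirichlet_sum M 0 = of_nat M"
  by (simp add: dirichlet_sum_def)

lemma norm_dirichlet_sum_uminus [simp]: "cmod (dirichlet_sum M (- \<phi>)) = cmod (dirichlet_sum M \<phi>)"
proof -
  have "dirichlet_sum M (- \<phi>) = cnj (dirichlet_sum M \<phi>)"
    by (simp add: dirichlet_sum_def cis_cnj)
  then show ?thesis by simp
qed

lemma dirichlet_sum_minus_2pi: "dirichlet_sum M (\<phi> - 2 * pi) = dirichlet_sum M \<phi>"
proof -
  have "cis (real j * (\<phi> - 2 * pi)) = cis (real j * \<phi>)" for j
  proof -
    have "cis (real j * (\<phi> - 2 * pi)) = cis (real j * \<phi>) * cis (2 * pi * (- real j))"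
      by (simp add: cis_mult algebra_simps)
    also have "cis (2 * pi * (- real j)) = 1"
      by (rule cis_multiple_2pi) (simp add: Ints_minus)
    finally show ?thesis by simp
  qed
  then show ?thesis by (simp add: dirichlet_sum_def)
qed

lemma dirichlet_sum_root_of_unity:
  fixes d :: int
  assumes "0 < M" "d \<noteq> 0" "\<bar>d\<bar> < int M"
  shows "dirichlet_sum M (2 * pi * real_of_int d / real M) = 0"
proof -
  let ?\<phi> = "2 * pi * real_of_int d / real M"
  have "cis (real M * ?\<phi>) = cis (2 * pi * real_of_int d)"
    using assms(1) by (simp add: field_simps)
  also have "\<dots> = 1" by (rule cis_multiple_2pi) simp
  finally have "cis (real M * ?\<phi>) = 1" .
  then have eq: "dirichlet_sum M ?\<phi> * (cis ?\<phi> - 1) = 0"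
    using dirichlet_sum_mult_cis_minus_1[of M ?\<phi>] by simp
  have "sin (?\<phi> / 2) \<noteq> 0"
  proof
    assume "sin (?\<phi> / 2) = 0"
    then obtain i :: int where "?\<phi> / 2 = of_int i * pi"
      by (auto simp: sin_zero_iff_int2)
    then have "real_of_int d = real_of_int (i * int M)"
      using assms(1) by (simp add: field_simps)
    then have "d = i * int M" by (simp only: of_int_eq_iff)
    with assms show False using multiple_eq_0_if_abs_less by blast
  qed
  then have "cis ?\<phi> - 1 \<noteq> 0" using norm_cis_minus_1[of ?\<phi>] by auto
  with eq show ?thesis by simp
qed

lemma sum_cis_orthogonal:
  assumes "x < N" "y < N"
  shows "(\<Sum>z<N. cis (2 * pi * real z * real y / real N) * cis (- 2 * pi * real x * real z / real N))
     = (if x = y then of_nat N else 0)"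
proof -
  have "(\<Sum>z<N. cis (2 * pi * real z * real y / real N) * cis (- 2 * pi * real x * real z / real N))
      = dirichlet_sum N (2 * pi * real_of_int (int y - int x) / real N)"
    unfolding dirichlet_sum_def by (intro sum.cong) (auto simp: cis_mult field_simps)
  also have "\<dots> = (if x = y then of_nat N else 0)"
  proof (cases "x = y")
    case False
    then show ?thesis using assms by (subst dirichlet_sum_root_of_unity) auto
  qed simp
  finally show ?thesis .
qed

text \<open>Parseval's identity for the discrete Fourier transform of \<open>j \<mapsto> cis (j \<alpha>)\<close>.\<close>
lemma sum_norm_dirichlet_sum_shifts:
  assumes "0 < M"
  shows "(\<Sum>z<M. (cmod (dirichlet_sum M (\<alpha> - 2 * pi * real z / real M)))\<^sup>2) = (real M)\<^sup>2"
proof -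
  let ?c = "\<lambda>j k. cis (real j * \<alpha>) * cis (- (real k * \<alpha>))"
  let ?e = "\<lambda>z k j. cis (2 * pi * real z * real k / real M) * cis (- 2 * pi * real j * real z / real M)"
  have product: "cis (real j * (\<alpha> - 2 * pi * real z / real M)) * cnj (cis (real k * (\<alpha> - 2 * pi * real z / real M)))
      = ?c j k * ?e z k j" for j k z
  proof -
    have "cis (real j * (\<alpha> - 2 * pi * real z / real M)) * cnj (cis (real k * (\<alpha> - 2 * pi * real z / real M)))
        = cis (real j * (\<alpha> - 2 * pi * real z / real M) + - (real k * (\<alpha> - 2 * pi * real z / real M)))"
      by (simp add: cis_cnj cis_mult)
    also have "\<dots> = cis (real j * \<alpha> + - (real k * \<alpha>)
        + (2 * pi * real z * real k / real M + - 2 * pi * real j * real z / real M))"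
      using assms by (intro arg_cong[where f=cis]) (simp add: field_simps)
    finally show ?thesis by (simp add: cis_mult)
  qed
  have "complex_of_real (\<Sum>z<M. (cmod (dirichlet_sum M (\<alpha> - 2 * pi * real z / real M)))\<^sup>2)
      = (\<Sum>z<M. \<Sum>j<M. \<Sum>k<M. ?c j k * ?e z k j)"
    unfolding of_real_sum complex_norm_square dirichlet_sum_def cnj_sum sum_product product ..
  also have "\<dots> = (\<Sum>j<M. \<Sum>k<M. ?c j k * (\<Sum>z<M. ?e z k j))"
    by (subst sum.swap, rule sum.cong[OF refl], subst sum.swap) (simp add: sum_distrib_left)
  also have "\<dots> = (\<Sum>j<M. \<Sum>k<M. if j = k then of_nat M else 0)"
    by (intro sum.cong refl) (subst sum_cis_orthogonal, auto simp: cis_mult)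
  also have "\<dots> = complex_of_real ((real M)\<^sup>2)" by (simp add: power2_eq_square)
  finally show ?thesis by (simp only: of_real_eq_iff)
qed

lemma dirichlet_sum_sq_ge_sinc_sq:
  assumes M: "0 < M" and e: "0 < e"
  shows "(sin (pi * e))\<^sup>2 / (pi\<^sup>2 * e\<^sup>2) \<le> (cmod (dirichlet_sum M (2 * pi * e / real M)))\<^sup>2 / (real M)\<^sup>2"
proof (cases "sin (pi * e / real M) = 0")
  case True
  then have "sin (pi * e) = 0"
    using norm_dirichlet_sum_mult_sin[of M "2 * pi * e / real M"] M by (simp add: field_simps)
  then show ?thesis by simp
next
  case False
  let ?D = "cmod (dirichlet_sum M (2 * pi * e / real M))"
  have pos: "0 < \<bar>sin (pi * e / real M)\<bar>" using False by simp
  have le: "\<bar>sin (pi * e / real M)\<bar> \<le> pi * e / real M"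
    using abs_sin_x_le_abs_x[of "pi * e / real M"] e M by simp
  have "?D = \<bar>sin (pi * e)\<bar> / \<bar>sin (pi * e / real M)\<bar>"
    using norm_dirichlet_sum_mult_sin[of M "2 * pi * e / real M"] pos M by (simp add: field_simps)
  also have "\<dots> \<ge> \<bar>sin (pi * e)\<bar> / (pi * e / real M)"
    using pos le e M by (intro divide_left_mono) auto
  finally have "(\<bar>sin (pi * e)\<bar> / (pi * e / real M))\<^sup>2 / (real M)\<^sup>2 \<le> ?D\<^sup>2 / (real M)\<^sup>2"
    using e M by (intro divide_right_mono power_mono) auto
  also have "(\<bar>sin (pi * e)\<bar> / (pi * e / real M))\<^sup>2 / (real M)\<^sup>2 = (sin (pi * e))\<^sup>2 / (pi\<^sup>2 * e\<^sup>2)"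
    using M e by (simp add: field_simps power2_eq_square)
  finally show ?thesis .
qed

lemma norm_dirichlet_sum_pair_ge:
  assumes M: "0 < M" and d: "0 \<le> d" "d < 1"
  shows "7/10 * (real M)\<^sup>2 \<le> (cmod (dirichlet_sum M (2 * pi * d / real M)))\<^sup>2
    + (cmod (dirichlet_sum M (2 * pi * (1 - d) / real M)))\<^sup>2"
proof (cases "d = 0")
  case True
  then show ?thesis by simp
next
  case False
  with d have "0 < d" by simp
  have "sin (pi * (1 - d)) = sin (pi * d)" by (simp add: right_diff_distrib sin_diff)
  then have "(sin (pi * d))\<^sup>2 / (pi\<^sup>2 * (1 - d)\<^sup>2)
      \<le> (cmod (dirichlet_sum M (2 * pi * (1 - d) / real M)))\<^sup>2 / (real M)\<^sup>2"
    using dirichlet_sum_sq_ge_sinc_sq[OF M, of "1 - d"] d by simp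
  then have "7/10 \<le> (cmod (dirichlet_sum M (2 * pi * d / real M)))\<^sup>2 / (real M)\<^sup>2
      + (cmod (dirichlet_sum M (2 * pi * (1 - d) / real M)))\<^sup>2 / (real M)\<^sup>2"
    using sinc_sq_pair_ge[OF \<open>0 < d\<close> d(2)] dirichlet_sum_sq_ge_sinc_sq[OF M \<open>0 < d\<close>]
    by linarith
  then show ?thesis using M by (simp add: field_simps)
qed

lemma norm_dirichlet_sum_reflect:
  assumes "0 < M" "z \<le> M"
  shows "cmod (dirichlet_sum M (- \<alpha> - 2 * pi * real (M - z) / real M))
    = cmod (dirichlet_sum M (\<alpha> - 2 * pi * real z / real M))"
proof -
  have "- \<alpha> - 2 * pi * real (M - z) / real M = - (\<alpha> - 2 * pi * real z / real M) - 2 * pi"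
    using assms by (simp add: of_nat_diff field_simps)
  then show ?thesis by (simp only: dirichlet_sum_minus_2pi norm_dirichlet_sum_uminus)
qed

lemma parallelogram_law_cmod:
  "(cmod (a - b))\<^sup>2 + (cmod (a + b))\<^sup>2 = 2 * (cmod a)\<^sup>2 + 2 * (cmod b)\<^sup>2"
proof -
  have "complex_of_real ((cmod (a - b))\<^sup>2 + (cmod (a + b))\<^sup>2) = (a - b) * cnj (a - b) + (a + b) * cnj (a + b)"
    by (simp only: of_real_add complex_norm_square)
  also have "\<dots> = 2 * (a * cnj a) + 2 * (b * cnj b)" by (simp add: algebra_simps)
  also have "\<dots> = complex_of_real (2 * (cmod a)\<^sup>2 + 2 * (cmod b)\<^sup>2)"
    by (simp only: of_real_add of_real_mult complex_norm_square) simp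
  finally show ?thesis by (simp only: of_real_eq_iff)
qed

lemma norm_sum_sin_sq_plus_norm_sum_cos_sq:
  fixes c :: "'a \<Rightarrow> complex" and a :: "'a \<Rightarrow> real"
  shows "(cmod (\<Sum>x\<in>A. c x * complex_of_real (sin (a x))))\<^sup>2 + (cmod (\<Sum>x\<in>A. c x * complex_of_real (cos (a x))))\<^sup>2
    = ((cmod (\<Sum>x\<in>A. c x * cis (a x)))\<^sup>2 + (cmod (\<Sum>x\<in>A. c x * cis (- a x)))\<^sup>2) / 2"
proof -
  define P where "P = (\<Sum>x\<in>A. c x * cis (a x))"
  define Q where "Q = (\<Sum>x\<in>A. c x * cis (- a x))"
  have sin_cos: "complex_of_real (sin t) = (cis t - cis (- t)) / (2 * \<i>)"
    "complex_of_real (cos t) = (cis t + cis (- t)) / 2" for t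
    by (simp_all add: complex_eq_iff cis.code)
  have pointwise: "c x * complex_of_real (sin (a x)) = (c x * cis (a x) - c x * cis (- a x)) / (2 * \<i>)"
    "c x * complex_of_real (cos (a x)) = (c x * cis (a x) + c x * cis (- a x)) / 2" for x
    unfolding sin_cos by (simp_all add: right_diff_distrib distrib_left)
  have sums: "(\<Sum>x\<in>A. c x * complex_of_real (sin (a x))) = (P - Q) / (2 * \<i>)"
    "(\<Sum>x\<in>A. c x * complex_of_real (cos (a x))) = (P + Q) / 2"
    unfolding pointwise P_def Q_def sum_divide_distrib[symmetric] sum_subtractf sum.distrib by simp_all
  show ?thesis
    unfolding sums P_def[symmetric] Q_def[symmetric] using parallelogram_law_cmod[of P Q]
    by (simp add: norm_divide power_divide norm_mult)
qed

section \<open>Grover iterations\<close>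

definition uniform_state :: "nat \<Rightarrow> nat \<Rightarrow> complex" where
  "uniform_state N y = (if y < N then 1 / complex_of_real (sqrt (real N)) else 0)"

lemma qft_ket0: "qft N ket0 = uniform_state N"
proof
  fix y
  have "(\<Sum>x<N. cis (2 * pi * real x * real y / real N) / complex_of_real (sqrt (real N)) * ket0 x)
      = (\<Sum>x<N. if x = 0 then 1 / complex_of_real (sqrt (real N)) else 0)"
    by (intro sum.cong) (auto simp: ket0_def)
  then show "qft N ket0 y = uniform_state N y"
    by (simp add: qft_def uniform_state_def)
qed

lemma Q_op_eq:
  assumes N: "0 < N"
  shows "Q_op f N v y =
    (if y < N then - S_f f v y + complex_of_real (2 / real N) * (\<Sum>x<N. S_f f v x) else 0)"
proof (cases "y < N")
  case True
  define w where "w = S_f f v"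
  define c where "c = complex_of_real (sqrt (real N))"
  have cc: "c * c = of_nat N" unfolding c_def of_real_mult[symmetric] by simp
  have c0: "c \<noteq> 0" unfolding c_def using N by simp
  define u where "u = inv_qft N w"
  have u: "u z = (\<Sum>x<N. cis (- 2 * pi * real x * real z / real N) / c * w x)" if "z < N" for z
    using that unfolding u_def inv_qft_def c_def by simp
  let ?e = "\<lambda>z. cis (2 * pi * real z * real y / real N) / c"
  have "qft N (S_0 u) y = (\<Sum>z<N. ?e z * S_0 u z)"
    using True unfolding qft_def c_def by simp
  also have "\<dots> = (\<Sum>z<N. ?e z * u z) - (\<Sum>z<N. if z = 0 then 2 * (?e z * u z) else 0)"
    unfolding sum_subtractf[symmetric] by (intro sum.cong refl) (simp add: S_0_def)
  also have "(\<Sum>z<N. if z = 0 then 2 * (?e z * u z) else 0) = 2 * (u 0 / c)"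
    using N by simp
  also have "u 0 = (\<Sum>x<N. w x) / c"
    using N by (simp add: u sum_divide_distrib)
  also have "(\<Sum>z<N. ?e z * u z) = (\<Sum>z<N. \<Sum>x<N. w x / (c * c) *
      (cis (2 * pi * real z * real y / real N) * cis (- 2 * pi * real x * real z / real N)))"
    by (intro sum.cong refl) (simp add: u sum_distrib_left mult_ac)
  also have "\<dots> = (\<Sum>x<N. w x / (c * c) *
      (\<Sum>z<N. cis (2 * pi * real z * real y / real N) * cis (- 2 * pi * real x * real z / real N)))"
    by (subst sum.swap) (simp add: sum_distrib_left)
  also have "\<dots> = (\<Sum>x<N. if x = y then w x else 0)"
    using True cc N by (intro sum.cong refl) (subst sum_cis_orthogonal, auto)
  also have "\<dots> = w y" using True by simp
  finally have "qft N (S_0 u) y = w y - complex_of_real (2 / real N) * (\<Sum>x<N. w x)"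
    using cc c0 by (simp add: field_simps)
  then show ?thesis using True unfolding Q_op_def u_def w_def by simp
qed (simp add: Q_op_def qft_def)

lemma num_sol_le: "num_sol f N \<le> N"
proof -
  have "card {x. x < N \<and> f x} \<le> card {..<N}" by (intro card_mono) auto
  then show ?thesis by (simp add: num_sol_def)
qed

lemma num_sol_pos: "y < N \<Longrightarrow> f y \<Longrightarrow> 0 < num_sol f N"
  unfolding num_sol_def by (subst card_gt_0_iff) auto

lemma num_sol_less: "y < N \<Longrightarrow> \<not> f y \<Longrightarrow> num_sol f N < N"
proof -
  assume "y < N" "\<not> f y"
  then have "{x. x < N \<and> f x} \<subset> {..<N}" by auto
  then have "card {x. x < N \<and> f x} < card {..<N}" by (intro psubset_card_mono) auto
  then show ?thesis by (simp add: num_sol_def)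
qed

lemma sum_if_num_sol:
  fixes A B :: "'a::comm_ring_1"
  shows "(\<Sum>x<N. if f x then A else B) = of_nat (num_sol f N) * A + of_nat (N - num_sol f N) * B"
proof -
  have c1: "card ({..<N} \<inter> {x. f x}) = num_sol f N"
    unfolding num_sol_def by (rule arg_cong[where f=card]) auto
  have "{..<N} \<inter> - {x. f x} = {..<N} - {x. x < N \<and> f x}" by auto
  then have c2: "card ({..<N} \<inter> - {x. f x}) = N - num_sol f N"
    unfolding num_sol_def by (simp only:) (subst card_Diff_subset, auto)
  have "(\<Sum>x<N. if f x then A else B) = (\<Sum>x\<in>{..<N} \<inter> {x. f x}. A) + (\<Sum>x\<in>{..<N} \<inter> - {x. f x}. B)"
    by (simp add: sum.If_cases)
  then show ?thesis by (simp add: c1 c2)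
qed

definition grover_angle :: "(nat \<Rightarrow> bool) \<Rightarrow> nat \<Rightarrow> real" where
  "grover_angle f N = arcsin (sqrt (real (num_sol f N) / real N))"

context
  fixes f :: "nat \<Rightarrow> bool" and N :: nat
  assumes N: "0 < N"
begin

lemma sqrt_fraction_num_sol_bounds: "0 \<le> sqrt (real (num_sol f N) / real N)" "sqrt (real (num_sol f N) / real N) \<le> 1"
  using num_sol_le[of f N] N by simp_all

lemma sin_grover_angle: "sin (grover_angle f N) = sqrt (real (num_sol f N) / real N)"
  using sqrt_fraction_num_sol_bounds unfolding grover_angle_def by (intro sin_arcsin) linarith+

lemma grover_angle_nonneg: "0 \<le> grover_angle f N"
  using sqrt_fraction_num_sol_bounds unfolding grover_angle_def by (simp add: arcsin_nonneg)

lemma grover_angle_le: "grover_angle f N \<le> pi / 2"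
  using sqrt_fraction_num_sol_bounds unfolding grover_angle_def by (intro arcsin_ubound) linarith+

lemma num_sol_eq_sin_grover_angle: "real (num_sol f N) = (sqrt (real N) * sin (grover_angle f N))\<^sup>2"
  using N by (simp add: sin_grover_angle power_mult_distrib)

lemma non_sol_eq_cos_grover_angle:
  "real N - real (num_sol f N) = (sqrt (real N) * cos (grover_angle f N))\<^sup>2"
  using N num_sol_eq_sin_grover_angle by (simp add: power_mult_distrib cos_squared_eq algebra_simps)

lemma sin_grover_angle_pos_iff: "0 < sin (grover_angle f N) \<longleftrightarrow> 0 < num_sol f N"
  using N by (simp add: sin_grover_angle zero_less_divide_iff)

lemma grover_angle_pos_iff: "0 < grover_angle f N \<longleftrightarrow> 0 < num_sol f N"
proof
  assume "0 < grover_angle f N"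
  then have "0 < sin (grover_angle f N)"
    using grover_angle_le pi_gt_zero by (intro sin_gt_zero) linarith+
  then show "0 < num_sol f N" using sin_grover_angle_pos_iff by simp
next
  assume "0 < num_sol f N"
  then have "sin (grover_angle f N) \<noteq> 0" using sin_grover_angle_pos_iff by simp
  then show "0 < grover_angle f N" using grover_angle_nonneg by (cases "grover_angle f N = 0") auto
qed

lemma grover_angle_eq_0_iff: "grover_angle f N = 0 \<longleftrightarrow> num_sol f N = 0"
  using grover_angle_nonneg grover_angle_pos_iff by linarith

lemma cos_grover_angle_pos_iff: "0 < cos (grover_angle f N) \<longleftrightarrow> num_sol f N < N"
proof
  assume "0 < cos (grover_angle f N)"
  then have "0 < (sqrt (real N) * cos (grover_angle f N))\<^sup>2" using N by simp
  then have "0 < real N - real (num_sol f N)" by (simp only: non_sol_eq_cos_grover_angle)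
  then show "num_sol f N < N" by simp
next
  assume "num_sol f N < N"
  then have "cos (grover_angle f N) \<noteq> 0" using non_sol_eq_cos_grover_angle by auto
  moreover have "0 \<le> cos (grover_angle f N)"
    using grover_angle_nonneg grover_angle_le by (intro cos_ge_zero) auto
  ultimately show "0 < cos (grover_angle f N)" by simp
qed

end

text \<open>Amplitudes of \<open>Q\<^sup>j\<close> applied to the uniform state, read off from the rotation by \<open>2 \<theta>\<close>.
  A denominator vanishes only when its branch concerns no \<open>y < N\<close>.\<close>
definition grover_amp :: "(nat \<Rightarrow> bool) \<Rightarrow> nat \<Rightarrow> nat \<Rightarrow> nat \<Rightarrow> real" where
  "grover_amp f N j y =
    (if f y then sin ((2 * real j + 1) * grover_angle f N) / (sqrt (real N) * sin (grover_angle f N))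
     else cos ((2 * real j + 1) * grover_angle f N) / (sqrt (real N) * cos (grover_angle f N)))"

context
  fixes f :: "nat \<Rightarrow> bool" and N :: nat
  assumes N: "0 < N"
begin

lemma grover_amp_0:
  assumes "y < N"
  shows "grover_amp f N 0 y = 1 / sqrt (real N)"
proof (cases "f y")
  case True
  then have "sin (grover_angle f N) \<noteq> 0"
    using num_sol_pos[of y N f, OF assms True] sin_grover_angle_pos_iff[OF N, of f] by (metis order_less_irrefl)
  with True show ?thesis by (simp add: grover_amp_def)
next
  case False
  then have "cos (grover_angle f N) \<noteq> 0"
    using num_sol_less[of y N f, OF assms False] cos_grover_angle_pos_iff[OF N, of f] by (metis order_less_irrefl)
  with False show ?thesis by (simp add: grover_amp_def)
qed

lemma sum_signed_grover_amp:
  "(\<Sum>x<N. if f x then - grover_amp f N j x else grover_amp f N j x)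
     = sqrt (real N) * cos ((2 * real j + 2) * grover_angle f N)"
proof -
  define \<theta> where "\<theta> = grover_angle f N"
  define \<phi> where "\<phi> = (2 * real j + 1) * \<theta>"
  have "(\<Sum>x<N. if f x then - grover_amp f N j x else grover_amp f N j x)
      = (\<Sum>x<N. if f x then - (sin \<phi> / (sqrt (real N) * sin \<theta>)) else cos \<phi> / (sqrt (real N) * cos \<theta>))"
    by (intro sum.cong) (auto simp: grover_amp_def \<phi>_def \<theta>_def)
  also have "\<dots> = (sqrt (real N) * sin \<theta>)\<^sup>2 * (- (sin \<phi> / (sqrt (real N) * sin \<theta>)))
      + (sqrt (real N) * cos \<theta>)\<^sup>2 * (cos \<phi> / (sqrt (real N) * cos \<theta>))"
    unfolding sum_if_num_sol of_nat_diff[OF num_sol_le] \<theta>_def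
    unfolding non_sol_eq_cos_grover_angle[OF N] unfolding num_sol_eq_sin_grover_angle[OF N] ..
  also have "\<dots> = - (sqrt (real N) * sin \<theta>) * sin \<phi> + sqrt (real N) * cos \<theta> * cos \<phi>"
    by (simp only: mult_minus_right square_mult_divide mult_minus_left)
  also have "\<dots> = sqrt (real N) * cos (\<phi> + \<theta>)"
    by (simp add: cos_add algebra_simps)
  finally show ?thesis by (simp add: \<phi>_def \<theta>_def algebra_simps)
qed

lemma grover_amp_Suc:
  assumes "y < N"
  shows "grover_amp f N (Suc j) y = (if f y then grover_amp f N j y else - grover_amp f N j y)
     + 2 / real N * (\<Sum>x<N. if f x then - grover_amp f N j x else grover_amp f N j x)"
proof -
  define \<theta> where "\<theta> = grover_angle f N"
  define \<phi> where "\<phi> = (2 * real j + 1) * \<theta>"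
  have Suc: "(2 * real (Suc j) + 1) * \<theta> = \<phi> + 2 * \<theta>" "(2 * real j + 2) * \<theta> = \<phi> + \<theta>"
    by (simp_all add: \<phi>_def algebra_simps)
  have half: "(\<phi> + 2 * \<theta> - \<phi>) / 2 = \<theta>" "(\<phi> + 2 * \<theta> + \<phi>) / 2 = \<phi> + \<theta>"
    by simp_all
  have sum: "(\<Sum>x<N. if f x then - grover_amp f N j x else grover_amp f N j x) = sqrt (real N) * cos (\<phi> + \<theta>)"
    using sum_signed_grover_amp[of j] unfolding \<theta>_def[symmetric] Suc(2) .
  define s where "s = sqrt (real N)"
  have s: "0 < s" "real N = s\<^sup>2" using N by (simp_all add: s_def)
  show ?thesis
  proof (cases "f y")
    case True
    then have "sin \<theta> \<noteq> 0"
      unfolding \<theta>_def using num_sol_pos[of y N f, OF assms True] sin_grover_angle_pos_iff[OF N, of f]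
      by (metis order_less_irrefl)
    moreover have "sin (\<phi> + 2 * \<theta>) = sin \<phi> + 2 * sin \<theta> * cos (\<phi> + \<theta>)"
      using sin_diff_sin[of "\<phi> + 2 * \<theta>" \<phi>, unfolded half] by simp
    moreover have amp: "grover_amp f N (Suc j) y = sin (\<phi> + 2 * \<theta>) / (sqrt (real N) * sin \<theta>)"
      "grover_amp f N j y = sin \<phi> / (sqrt (real N) * sin \<theta>)"
      using True unfolding grover_amp_def \<theta>_def[symmetric] Suc(1) \<phi>_def[symmetric] by simp_all
    ultimately show ?thesis
      using True unfolding sum amp s_def[symmetric] unfolding s(2) using s(1) by (simp add: field_simps power2_eq_square)
  next
    case False
    then have "cos \<theta> \<noteq> 0"
      unfolding \<theta>_def using num_sol_less[of y N f, OF assms False] cos_grover_angle_pos_iff[OF N, of f]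
      by (metis order_less_irrefl)
    moreover have "cos (\<phi> + 2 * \<theta>) = - cos \<phi> + 2 * cos \<theta> * cos (\<phi> + \<theta>)"
      using cos_plus_cos[of "\<phi> + 2 * \<theta>" \<phi>, unfolded half] by (simp add: algebra_simps)
    moreover have amp: "grover_amp f N (Suc j) y = cos (\<phi> + 2 * \<theta>) / (sqrt (real N) * cos \<theta>)"
      "grover_amp f N j y = cos \<phi> / (sqrt (real N) * cos \<theta>)"
      using False unfolding grover_amp_def \<theta>_def[symmetric] Suc(1) \<phi>_def[symmetric] by simp_all
    ultimately show ?thesis
      using False unfolding sum amp s_def[symmetric] unfolding s(2) using s(1) by (simp add: field_simps power2_eq_square)
  qed
qed

lemma Q_op_power_uniform_state:
  "((Q_op f N) ^^ j) (\<lambda>y. \<kappa> * uniform_state N y) y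
     = (if y < N then \<kappa> * complex_of_real (grover_amp f N j y) else 0)"
proof (induction j arbitrary: y)
  case 0
  then show ?case by (simp add: grover_amp_0 uniform_state_def)
next
  case (Suc j)
  let ?V = "((Q_op f N) ^^ j) (\<lambda>y. \<kappa> * uniform_state N y)"
  let ?a = "\<lambda>x. if f x then - grover_amp f N j x else grover_amp f N j x"
  have S: "S_f f ?V x = (if x < N then \<kappa> * complex_of_real (?a x) else 0)" for x
    by (simp add: S_f_def Suc)
  then have sum: "(\<Sum>x<N. S_f f ?V x) = \<kappa> * complex_of_real (\<Sum>x<N. ?a x)"
    by (simp add: sum_distrib_left)
  have "((Q_op f N) ^^ Suc j) (\<lambda>y. \<kappa> * uniform_state N y) y = Q_op f N ?V y"
    by simp
  also have "\<dots> = (if y < N then - S_f f ?V y + complex_of_real (2 / real N) * (\<Sum>x<N. S_f f ?V x) else 0)"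
    by (rule Q_op_eq[OF N])
  also have "\<dots> = (if y < N then \<kappa> * complex_of_real (grover_amp f N (Suc j) y) else 0)"
    unfolding sum by (simp add: S grover_amp_Suc algebra_simps)
  finally show ?case .
qed

end

section \<open>The output distribution of Count\<close>

lemma qft_delta_0:
  assumes "x < M"
  shows "qft M (\<lambda>j. if j = 0 then a else 0) x = a / complex_of_real (sqrt (real M))"
proof -
  have "(\<Sum>j<M. cis (2 * pi * real j * real x / real M) / complex_of_real (sqrt (real M)) * (if j = 0 then a else 0))
      = (\<Sum>j<M. if j = 0 then a / complex_of_real (sqrt (real M)) else 0)"
    by (intro sum.cong) auto
  then show ?thesis using assms by (simp add: qft_def)
qed

context
  fixes f :: "nat \<Rightarrow> bool" and N M :: nat
  assumes N: "0 < N" and M: "0 < M"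
begin

lemma count_state_eq:
  assumes y': "y' < M" and y: "y < N"
  shows "count_state f N M y' y
     = (\<Sum>x<M. cis (- 2 * pi * real x * real y' / real M) * complex_of_real (grover_amp f N x y)) / of_nat M"
proof -
  define c where "c = complex_of_real (sqrt (real M))"
  have cc: "c * c = of_nat M" unfolding c_def of_real_mult[symmetric] by simp
  have c0: "c \<noteq> 0" unfolding c_def using M by simp
  have first: "(\<lambda>y. qft M (\<lambda>j'. if j' = 0 then qft N ket0 y else 0) x) = (\<lambda>y. 1 / c * uniform_state N y)"
    if "x < M" for x
    using that by (simp add: qft_delta_0 qft_ket0 c_def)
  have "count_state f N M y' y = (\<Sum>x<M. cis (- 2 * pi * real x * real y' / real M) / c *
      (if x < M then ((Q_op f N) ^^ x) (\<lambda>y. qft M (\<lambda>j'. if j' = 0 then qft N ket0 y else 0) x) y else 0))"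
    unfolding count_state_def Let_def inv_qft_def c_def using y' by simp
  also have "\<dots> = (\<Sum>x<M. cis (- 2 * pi * real x * real y' / real M) / c * ((1 / c) * complex_of_real (grover_amp f N x y)))"
  proof (intro sum.cong refl)
    fix x assume "x \<in> {..<M}"
    then show "cis (- 2 * pi * real x * real y' / real M) / c *
        (if x < M then ((Q_op f N) ^^ x) (\<lambda>y. qft M (\<lambda>j'. if j' = 0 then qft N ket0 y else 0) x) y else 0)
      = cis (- 2 * pi * real x * real y' / real M) / c * ((1 / c) * complex_of_real (grover_amp f N x y))"
      using y unfolding first[of x, OF \<open>x \<in> {..<M}\<close>[simplified]] Q_op_power_uniform_state[OF N] by simp
  qed
  also have "\<dots> = (\<Sum>x<M. cis (- 2 * pi * real x * real y' / real M) * complex_of_real (grover_amp f N x y)) / (c * c)"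
    using c0 by (simp add: sum_divide_distrib field_simps)
  finally show ?thesis unfolding cc .
qed

lemma sin_odd_multiples_eq_0:
  "sin (grover_angle f N) = 0 \<Longrightarrow> sin ((2 * real x + 1) * grover_angle f N) = 0"
  using sin_grover_angle_pos_iff[OF N, of f] grover_angle_eq_0_iff[OF N, of f] by force

lemma cos_odd_multiples_eq_0:
  assumes "cos (grover_angle f N) = 0"
  shows "cos ((2 * real x + 1) * grover_angle f N) = 0"
proof -
  have "\<not> grover_angle f N < pi / 2"
    using assms grover_angle_nonneg[OF N, of f] cos_gt_zero_pi[of "grover_angle f N"] by auto
  then have "grover_angle f N = pi / 2" using grover_angle_le[OF N, of f] by simp
  moreover have "cos ((2 * real x + 1) * (pi / 2)) = 0"
    by (subst cos_zero_iff_int) (rule exI[of _ "2 * int x + 1"], simp)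
  ultimately show ?thesis by metis
qed

lemma count_prob_eq_sum_sin_cos:
  assumes y': "y' < M"
  shows "count_prob f N M y' =
    ((cmod (\<Sum>x<M. cis (- 2 * pi * real x * real y' / real M) * complex_of_real (sin ((2 * real x + 1) * grover_angle f N))))\<^sup>2
   + (cmod (\<Sum>x<M. cis (- 2 * pi * real x * real y' / real M) * complex_of_real (cos ((2 * real x + 1) * grover_angle f N))))\<^sup>2)
   / (real M)\<^sup>2"
    (is "_ = ((cmod ?X)\<^sup>2 + (cmod ?Z)\<^sup>2) / _")
proof -
  define s where "s = sqrt (real N) * sin (grover_angle f N)"
  define c where "c = sqrt (real N) * cos (grover_angle f N)"
  have X0: "s = 0 \<Longrightarrow> ?X = 0" and Z0: "c = 0 \<Longrightarrow> ?Z = 0"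
    using N by (simp_all add: s_def c_def sin_odd_multiples_eq_0 cos_odd_multiples_eq_0)
  have amp: "(cmod (count_state f N M y' y))\<^sup>2
      = (if f y then (cmod ?X)\<^sup>2 / ((real M)\<^sup>2 * s\<^sup>2) else (cmod ?Z)\<^sup>2 / ((real M)\<^sup>2 * c\<^sup>2))" if "y < N" for y
  proof -
    have "count_state f N M y' y = (if f y then ?X / (of_real s * of_nat M) else ?Z / (of_real c * of_nat M))"
      unfolding count_state_eq[OF y' that] grover_amp_def s_def c_def
      by (simp add: sum_divide_distrib divide_simps)
    then show ?thesis by (simp add: norm_divide norm_mult power_divide power_mult_distrib)
  qed
  have "count_prob f N M y' = (\<Sum>y<N. if f y then (cmod ?X)\<^sup>2 / ((real M)\<^sup>2 * s\<^sup>2) else (cmod ?Z)\<^sup>2 / ((real M)\<^sup>2 * c\<^sup>2))"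
    unfolding count_prob_def using y' by (auto intro!: sum.cong simp: amp)
  also have "\<dots> = s\<^sup>2 * ((cmod ?X)\<^sup>2 / ((real M)\<^sup>2 * s\<^sup>2)) + c\<^sup>2 * ((cmod ?Z)\<^sup>2 / ((real M)\<^sup>2 * c\<^sup>2))"
    unfolding sum_if_num_sol of_nat_diff[OF num_sol_le] s_def c_def
    unfolding non_sol_eq_cos_grover_angle[OF N] unfolding num_sol_eq_sin_grover_angle[OF N] ..
  also have "\<dots> = ((cmod ?X)\<^sup>2 + (cmod ?Z)\<^sup>2) / (real M)\<^sup>2"
    using X0 Z0 M by (cases "s = 0"; cases "c = 0") (simp_all add: field_simps)
  finally show ?thesis .
qed

lemma count_prob_eq:
  assumes "y' < M"
  shows "count_prob f N M y' =
    ((cmod (dirichlet_sum M (2 * grover_angle f N - 2 * pi * real y' / real M)))\<^sup>2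
   + (cmod (dirichlet_sum M (- 2 * grover_angle f N - 2 * pi * real y' / real M)))\<^sup>2) / (2 * (real M)\<^sup>2)"
proof -
  let ?\<theta> = "grover_angle f N"
  let ?c = "\<lambda>x. cis (- 2 * pi * real x * real y' / real M)"
  have "(\<Sum>x<M. ?c x * cis ((2 * real x + 1) * ?\<theta>))
      = cis ?\<theta> * dirichlet_sum M (2 * ?\<theta> - 2 * pi * real y' / real M)"
    "(\<Sum>x<M. ?c x * cis (- ((2 * real x + 1) * ?\<theta>)))
      = cis (- ?\<theta>) * dirichlet_sum M (- 2 * ?\<theta> - 2 * pi * real y' / real M)"
    unfolding dirichlet_sum_def sum_distrib_left cis_mult
    by (intro sum.cong refl arg_cong[where f=cis]; simp add: field_simps)+
  then show ?thesis
    unfolding count_prob_eq_sum_sin_cos[OF assms] norm_sum_sin_sq_plus_norm_sum_cos_sq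
    by (simp add: norm_mult field_simps)
qed

end

lemma count_est_eq_0_iff:
  assumes "0 < N" "0 < M" "y < M"
  shows "count_est N M y = 0 \<longleftrightarrow> y = 0"
proof -
  have "sin (pi * real y / real M) = 0 \<longleftrightarrow> y = 0"
  proof
    assume "sin (pi * real y / real M) = 0"
    then obtain i :: int where "pi * real y / real M = of_int i * pi"
      by (auto simp: sin_zero_iff_int2)
    then have "real_of_int (int y) = real_of_int (i * int M)"
      using assms(2) by (simp add: field_simps)
    then have "int y = i * int M" by (simp only: of_int_eq_iff)
    then have "int y = 0" by (rule multiple_eq_0_if_abs_less) (use assms(3) in simp)
    then show "y = 0" by simp
  qed simp
  then show ?thesis using assms(1) by (simp add: count_est_def)
qed

lemma count_est_reflect:
  assumes "0 < M" "y \<le> M"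
  shows "count_est N M (M - y) = count_est N M y"
proof -
  have "pi * real (M - y) / real M = pi - pi * real y / real M"
    using assms by (simp add: of_nat_diff field_simps)
  then show ?thesis by (simp add: count_est_def)
qed

context
  fixes f :: "nat \<Rightarrow> bool" and N M :: nat
  assumes N: "0 < N" and M: "0 < M"
begin

lemma count_prob_nonneg: "0 \<le> count_prob f N M y"
  unfolding count_prob_def by (auto intro!: sum_nonneg)

lemma count_prob_sum: "(\<Sum>y<M. count_prob f N M y) = 1"
proof -
  have "(\<Sum>y<M. count_prob f N M y)
      = (\<Sum>y<M. ((cmod (dirichlet_sum M (2 * grover_angle f N - 2 * pi * real y / real M)))\<^sup>2
             + (cmod (dirichlet_sum M (- 2 * grover_angle f N - 2 * pi * real y / real M)))\<^sup>2) / (2 * (real M)\<^sup>2))"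
    by (intro sum.cong refl) (simp add: count_prob_eq[OF N M])
  also have "\<dots> = ((real M)\<^sup>2 + (real M)\<^sup>2) / (2 * (real M)\<^sup>2)"
    unfolding sum_divide_distrib[symmetric] sum.distrib sum_norm_dirichlet_sum_shifts[OF M] ..
  also have "\<dots> = 1" using M by simp
  finally show ?thesis .
qed

lemma pmf_count_pmf: "pmf (count_pmf f N M) y = count_prob f N M y"
proof -
  have "(\<integral>\<^sup>+x. ennreal (count_prob f N M x) \<partial>count_space UNIV) = (\<Sum>x<M. ennreal (count_prob f N M x))"
    by (rule nn_integral_count_space') (auto simp: count_prob_def)
  also have "\<dots> = 1" using count_prob_sum count_prob_nonneg by (simp add: sum_ennreal)
  finally show ?thesis unfolding count_pmf_def
    by (intro pmf_embed_pmf) (auto simp: count_prob_nonneg)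
qed

lemma set_pmf_count_pmf: "set_pmf (count_pmf f N M) \<subseteq> {..<M}"
  by (auto simp: set_pmf_eq pmf_count_pmf count_prob_def)

lemma finite_set_pmf_count_pmf: "finite (set_pmf (count_pmf f N M))"
  using set_pmf_count_pmf by (rule finite_subset) simp

lemma pmf_count_pmf_0:
  "pmf (count_pmf f N M) 0 = (cmod (dirichlet_sum M (2 * grover_angle f N)))\<^sup>2 / (real M)\<^sup>2"
  using norm_dirichlet_sum_uminus[of M "2 * grover_angle f N"]
  by (simp add: pmf_count_pmf count_prob_eq[OF N M M] power2_eq_square)

lemma pmf_count_pmf_0_ge:
  assumes "real M * grover_angle f N \<le> 2"
  shows "1 - (real M * grover_angle f N)\<^sup>2 / 3 \<le> pmf (count_pmf f N M) 0"
proof (cases "grover_angle f N = 0")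
  case True
  then show ?thesis using M by (simp add: pmf_count_pmf_0)
next
  case False
  define \<theta> where "\<theta> = grover_angle f N"
  define x where "x = real M * \<theta>"
  have \<theta>: "0 < \<theta>" "\<theta> \<le> pi / 2"
    using False grover_angle_nonneg[OF N, of f] grover_angle_le[OF N, of f] by (simp_all add: \<theta>_def)
  then have s0: "0 < sin \<theta>" by (intro sin_gt_zero) auto
  have sle: "sin \<theta> \<le> \<theta>" using \<theta> by (intro sin_x_le_x) simp
  have x: "0 \<le> x" "x\<^sup>2 \<le> 4"
    using \<theta> assms power_mono[of x 2 2] by (simp_all add: x_def \<theta>_def)
  have D: "cmod (dirichlet_sum M (2 * \<theta>)) = \<bar>sin x\<bar> / sin \<theta>"
    using norm_dirichlet_sum_mult_sin[of M "2 * \<theta>"] s0 by (simp add: x_def field_simps)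
  have "0 \<le> x - x ^ 3 / 6"
    using x by (simp add: power2_eq_square power3_eq_cube field_simps mult_left_mono)
  moreover have "x - x ^ 3 / 6 \<le> \<bar>sin x\<bar>" using sin_ge_cubic[OF x(1)] by linarith
  ultimately have "(x - x ^ 3 / 6) / \<theta> \<le> \<bar>sin x\<bar> / sin \<theta>"
    using s0 sle by (intro frac_le) auto
  also have "(x - x ^ 3 / 6) / \<theta> = real M * (1 - x\<^sup>2 / 6)"
    using \<theta> by (simp add: x_def field_simps power2_eq_square power3_eq_cube)
  finally have "(real M * (1 - x\<^sup>2 / 6))\<^sup>2 \<le> (cmod (dirichlet_sum M (2 * \<theta>)))\<^sup>2"
    unfolding D using x M by (intro power_mono) auto
  then have "(1 - x\<^sup>2 / 6)\<^sup>2 \<le> pmf (count_pmf f N M) 0"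
    using M by (simp add: pmf_count_pmf_0 \<theta>_def power_mult_distrib pos_le_divide_eq mult.commute)
  moreover have "1 - x\<^sup>2 / 3 \<le> (1 - x\<^sup>2 / 6)\<^sup>2"
  proof -
    have "(1 - x\<^sup>2 / 6)\<^sup>2 = 1 - x\<^sup>2 / 3 + (x\<^sup>2)\<^sup>2 / 36" by (simp add: power2_eq_square field_simps)
    then show ?thesis by simp
  qed
  ultimately show ?thesis by (simp add: x_def \<theta>_def)
qed

lemma pmf_count_pmf_0_le:
  assumes "0 < num_sol f N"
  shows "pmf (count_pmf f N M) 0 \<le> 1 / ((real M)\<^sup>2 * (sin (grover_angle f N))\<^sup>2)"
proof -
  have s0: "0 < sin (grover_angle f N)" using sin_grover_angle_pos_iff[OF N] assms by simp
  have "cmod (dirichlet_sum M (2 * grover_angle f N)) * sin (grover_angle f N) \<le> 1"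
    using norm_dirichlet_sum_mult_sin[of M "2 * grover_angle f N"] s0 by simp
  then have "cmod (dirichlet_sum M (2 * grover_angle f N)) \<le> 1 / sin (grover_angle f N)"
    using s0 by (simp add: field_simps)
  then have "(cmod (dirichlet_sum M (2 * grover_angle f N)))\<^sup>2 \<le> (1 / sin (grover_angle f N))\<^sup>2"
    by (intro power_mono) auto
  then show ?thesis using M
    by (simp add: pmf_count_pmf_0 field_simps power2_eq_square divide_right_mono)
qed

text \<open>Of the two Dirichlet terms in \<open>count_prob_eq\<close>, the first concentrates near \<open>y = M \<theta> / \<pi>\<close>
  and the second near its mirror image \<open>M - y\<close>.\<close>
lemma prob_count_pmf_nearest_ge:
  assumes y: "y = nat \<lfloor>real M * grover_angle f N / pi\<rfloor>" and "1 \<le> y" "y + 1 < M"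
    and S: "{y, y + 1, M - y, M - (y + 1)} \<subseteq> S"
  shows "7/10 \<le> measure_pmf.prob (count_pmf f N M) S"
proof -
  define T where "T z = (cmod (dirichlet_sum M (2 * grover_angle f N - 2 * pi * real z / real M)))\<^sup>2" for z
  define T' where "T' z = (cmod (dirichlet_sum M (- 2 * grover_angle f N - 2 * pi * real z / real M)))\<^sup>2" for z
  define Y where "Y = {y, y + 1, M - y, M - (y + 1)}"
  have Y: "finite Y" "\<forall>z\<in>Y. z < M" using assms by (auto simp: Y_def)
  have T'_reflect: "T' (M - z) = T z" if "z \<le> M" for z
    using norm_dirichlet_sum_reflect[OF M that, of "2 * grover_angle f N"] by (simp add: T_def T'_def)
  have nonneg: "0 \<le> T z" "0 \<le> T' z" for z by (simp_all add: T_def T'_def)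
  have "T y + T (y + 1) = (\<Sum>z\<in>{y, y + 1}. T z)" by simp
  also have "\<dots> \<le> (\<Sum>z\<in>Y. T z)" using Y(1) nonneg by (intro sum_mono2) (auto simp: Y_def)
  finally have "T y + T (y + 1) \<le> (\<Sum>z\<in>Y. T z)" .
  moreover have "T y + T (y + 1) \<le> (\<Sum>z\<in>Y. T' z)"
  proof -
    have "T y + T (y + 1) = (\<Sum>z\<in>{M - y, M - (y + 1)}. T' z)"
      using assms by (simp add: T'_reflect)
    also have "\<dots> \<le> (\<Sum>z\<in>Y. T' z)" using Y(1) nonneg by (intro sum_mono2) (auto simp: Y_def)
    finally show ?thesis .
  qed
  moreover have "7/10 * (real M)\<^sup>2 \<le> T y + T (y + 1)"
  proof -
    define d where "d = real M * grover_angle f N / pi - real y"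
    have "0 \<le> real M * grover_angle f N / pi" using grover_angle_nonneg[OF N] by simp
    then have "0 \<le> d" "d < 1" unfolding d_def y by linarith+
    moreover have "2 * grover_angle f N - 2 * pi * real y / real M = 2 * pi * d / real M"
      "2 * grover_angle f N - 2 * pi * real (y + 1) / real M = - (2 * pi * (1 - d) / real M)"
      using M by (simp_all add: d_def field_simps)
    ultimately show ?thesis using norm_dirichlet_sum_pair_ge[OF M] by (simp add: T_def)
  qed
  ultimately have "7/10 \<le> ((\<Sum>z\<in>Y. T z) + (\<Sum>z\<in>Y. T' z)) / (2 * (real M)\<^sup>2)"
    using M by (simp add: field_simps)
  also have "\<dots> = measure_pmf.prob (count_pmf f N M) Y"
    unfolding measure_measure_pmf_finite[OF Y(1)] sum_divide_distrib sum.distrib[symmetric]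
    using Y(2) by (intro sum.cong refl) (simp add: pmf_count_pmf count_prob_eq[OF N M] T_def T'_def)
  also have "\<dots> \<le> measure_pmf.prob (count_pmf f N M) S"
    using S by (intro measure_pmf.finite_measure_mono) (auto simp: Y_def)
  finally show ?thesis .
qed

lemma set_pmf_count_pmf_no_solution:
  assumes "num_sol f N = 0"
  shows "set_pmf (count_pmf f N M) = {0}"
proof -
  have \<theta>: "grover_angle f N = 0" using grover_angle_eq_0_iff[OF N] assms by simp
  have "pmf (count_pmf f N M) y = 0" if "y \<noteq> 0" for y
  proof (cases "y < M")
    case True
    have "dirichlet_sum M (2 * pi * real_of_int (- int y) / real M) = 0"
      using True that M by (intro dirichlet_sum_root_of_unity) auto
    then have "dirichlet_sum M (- 2 * pi * real y / real M) = 0" by simp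
    then show ?thesis by (simp add: pmf_count_pmf count_prob_eq[OF N M True] \<theta>)
  qed (simp add: pmf_count_pmf count_prob_def)
  then have "set_pmf (count_pmf f N M) \<subseteq> {0}" by (auto simp: set_pmf_eq)
  then show ?thesis using set_pmf_not_empty[of "count_pmf f N M"] by blast
qed

end

section \<open>The doubling loop\<close>

declare ac_loop.simps [simp del]

lemma set_pmf_ac_loop: "set_pmf (ac_loop f N l) \<subseteq> {l..max l N}"
proof (induction f N l rule: ac_loop.induct)
  case (1 f N l)
  let ?continue = "\<lambda>y. count_est N (2 ^ l) y = 0 \<and> (2::real) ^ l < 2 * sqrt (real N)"
  show ?case
  proof
    fix L assume "L \<in> set_pmf (ac_loop f N l)"
    then obtain y where y: "y \<in> set_pmf (count_pmf f N (2 ^ l))"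
      and L: "L \<in> set_pmf (if ?continue y then ac_loop f N (Suc l) else return_pmf l)"
      by (subst (asm) ac_loop.simps) auto
    show "L \<in> {l..max l N}"
    proof (cases "?continue y")
      case True
      then have "l < N" using ac_loop_termination_aux by blast
      with 1[OF y True] L True show ?thesis by auto
    next
      case False
      then have "L = l" using L by (subst (asm) if_not_P) auto
      then show ?thesis by simp
    qed
  qed
qed

lemma finite_set_pmf_ac_loop: "finite (set_pmf (ac_loop f N l))"
  using set_pmf_ac_loop by (rule finite_subset) simp

lemma expectation_ac_loop:
  fixes h :: "nat \<Rightarrow> real"
  assumes N: "0 < N"
  shows "measure_pmf.expectation (ac_loop f N l) h =
    (if (2::real) ^ l < 2 * sqrt (real N)
     then pmf (count_pmf f N (2 ^ l)) 0 * measure_pmf.expectation (ac_loop f N (Suc l)) h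
          + (1 - pmf (count_pmf f N (2 ^ l)) 0) * h l
     else h l)"
proof -
  define M :: nat where "M = 2 ^ l"
  have M: "0 < M" by (simp add: M_def)
  define p where "p = pmf (count_pmf f N M)"
  define E where "E = (if (2::real) ^ l < 2 * sqrt (real N)
    then measure_pmf.expectation (ac_loop f N (Suc l)) h else h l)"
  have "measure_pmf.expectation (ac_loop f N l) h =
     (\<Sum>y<M. p y *\<^sub>R measure_pmf.expectation
        (if count_est N M y = 0 \<and> (2::real) ^ l < 2 * sqrt (real N) then ac_loop f N (Suc l) else return_pmf l) h)"
    unfolding ac_loop.simps[of f N l] M_def[symmetric] p_def
    by (rule pmf_expectation_bind) (auto simp: finite_set_pmf_ac_loop set_pmf_count_pmf[OF N M])
  also have "\<dots> = (\<Sum>y<M. p y * h l + (if y = 0 then p 0 * (E - h l) else 0))"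
    by (intro sum.cong refl) (auto simp: count_est_eq_0_iff[OF N M] E_def algebra_simps)
  also have "\<dots> = h l + p 0 * (E - h l)"
    using M by (simp add: sum.distrib p_def pmf_count_pmf[OF N M] count_prob_sum[OF N M]
        flip: sum_distrib_right)
  finally show ?thesis
    by (cases "(2::real) ^ l < 2 * sqrt (real N)") (simp_all add: E_def p_def M_def algebra_simps)
qed

lemma prob_angle_bound_step:
  fixes x c p P :: real
  assumes "0 \<le> x" "0 \<le> p" "p \<le> 1" "0 \<le> P" "x < c \<Longrightarrow> 1 - x\<^sup>2 / 3 \<le> p"
    and P: "P \<le> (if 2 * x < c then (4 * c\<^sup>2 - (2 * x)\<^sup>2) / 9 else 0)"
  shows "p * P + (1 - p) * (if x < c then 1 else 0) \<le> (if x < c then (4 * c\<^sup>2 - x\<^sup>2) / 9 else 0)"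
proof (cases "x < c")
  case True
  have "p * P \<le> (4 * c\<^sup>2 - (2 * x)\<^sup>2) / 9"
  proof (cases "2 * x < c")
    case True
    then show ?thesis using assms mult_left_le_one_le[of P p] by simp
  next
    case False
    have "x\<^sup>2 \<le> c\<^sup>2" using \<open>x < c\<close> assms(1) by (intro power_mono) auto
    then have "0 \<le> (4 * c\<^sup>2 - (2 * x)\<^sup>2) / 9" by (simp add: power_mult_distrib)
    moreover have "p * P \<le> 0" using P False assms(2) by (simp add: mult_nonneg_nonpos)
    ultimately show ?thesis by linarith
  qed
  then show ?thesis using True assms(5) by (simp add: power_mult_distrib field_simps)
next
  case False
  then have "P \<le> 0" using P assms(1) by simp
  then show ?thesis using False assms(2) by (simp add: mult_nonneg_nonpos)
qed

lemma expectation_pow2_bound_step: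
  fixes x s p E :: real
  assumes "0 < x" "1 \<le> s" "0 \<le> p" "p \<le> 1" "2 * s \<le> x \<Longrightarrow> p \<le> 1 / 4"
    and E: "E \<le> (if 2 * x < 2 * s then 12 * s - 2 * x else 2 * (2 * x))"
  shows "p * E + (1 - p) * x \<le> (if x < 2 * s then 12 * s - x else 2 * x)"
proof -
  let ?H = "if 2 * x < 2 * s then 12 * s - 2 * x else 2 * (2 * x)"
  have "0 \<le> ?H" using assms(1,2) by auto
  have pE: "p * E \<le> p * ?H" using E assms(3) by (rule mult_left_mono)
  show ?thesis
  proof (cases "x < 2 * s")
    case True
    have "p * ?H \<le> ?H" using \<open>0 \<le> ?H\<close> assms(3,4) by (rule mult_left_le_one_le)
    moreover have "(1 - p) * x \<le> x" using assms(1,3) by simp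
    moreover have "?H + x \<le> 12 * s - x" using True by auto
    ultimately show ?thesis using pE True by simp
  next
    case False
    then have "?H = 4 * x" using assms(2) by auto
    then have "p * E + (1 - p) * x \<le> x + 3 * p * x" using pE by (simp add: algebra_simps)
    also have "\<dots> \<le> x + 3 * (1 / 4) * x"
      using assms(1,5) False by (intro add_left_mono mult_right_mono) auto
    finally show ?thesis using False assms(1) by simp
  qed
qed

context
  fixes f :: "nat \<Rightarrow> bool" and N :: nat
  assumes N: "0 < N" and t: "0 < num_sol f N"
begin

lemma pow2_grover_angle_ge_at_cap:
  assumes "2 * sqrt (real N) \<le> 2 ^ l"
  shows "2 \<le> 2 ^ l * grover_angle f N"
proof -
  have "2 \<le> 2 * sqrt (real (num_sol f N))" using t by simp
  also have "\<dots> = 2 * sqrt (real N) * sin (grover_angle f N)"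
    using num_sol_eq_sin_grover_angle[OF N, of f] sin_grover_angle_pos_iff[OF N, of f] t by simp
  also have "\<dots> \<le> 2 ^ l * sin (grover_angle f N)"
    using assms sin_grover_angle_pos_iff[OF N, of f] t by (intro mult_right_mono) auto
  also have "\<dots> \<le> 2 ^ l * grover_angle f N"
    using sin_x_le_x[OF grover_angle_nonneg[OF N]] by simp
  finally show ?thesis .
qed

text \<open>While \<open>x = 2\<^sup>l \<theta> < c\<close>, a round stops with probability at most \<open>x\<^sup>2/3\<close>
  (by \<open>pmf_count_pmf_0_ge\<close>), and the next round has angle \<open>2 x\<close>; the bound is the invariant
  of the induction.\<close>
lemma prob_ac_loop_angle_less:
  assumes c: "0 < c" "c \<le> 2"
  shows "measure_pmf.prob (ac_loop f N l) {L. 2 ^ L * grover_angle f N < c}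
     \<le> (if 2 ^ l * grover_angle f N < c then (4 * c\<^sup>2 - (2 ^ l * grover_angle f N)\<^sup>2) / 9 else 0)"
proof (induction "N - l" arbitrary: l rule: less_induct)
  case less
  define x where "x = 2 ^ l * grover_angle f N"
  define p where "p = pmf (count_pmf f N (2 ^ l)) 0"
  define P where "P l' = measure_pmf.prob (ac_loop f N l') {L. 2 ^ L * grover_angle f N < c}" for l'
  have x0: "0 \<le> x" using grover_angle_nonneg[OF N] by (simp add: x_def)
  have rec: "P l = (if (2::real) ^ l < 2 * sqrt (real N)
      then p * P (Suc l) + (1 - p) * (if x < c then 1 else 0) else (if x < c then 1 else 0))"
    unfolding P_def p_def x_def
    using expectation_ac_loop[OF N, of f l "indicator {L. 2 ^ L * grover_angle f N < c}"] by simp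
  show ?case
  proof (cases "(2::real) ^ l < 2 * sqrt (real N)")
    case False
    then have "2 \<le> x" unfolding x_def by (intro pow2_grover_angle_ge_at_cap) simp
    with c False rec show ?thesis by (simp add: P_def x_def)
  next
    case True
    then have "N - Suc l < N - l" using ac_loop_termination_aux by fastforce
    moreover have x2: "2 ^ Suc l * grover_angle f N = 2 * x" by (simp add: x_def)
    ultimately have "P (Suc l) \<le> (if 2 * x < c then (4 * c\<^sup>2 - (2 * x)\<^sup>2) / 9 else 0)"
      using less[of "Suc l"] unfolding P_def x2 by simp
    moreover have "x < c \<Longrightarrow> 1 - x\<^sup>2 / 3 \<le> p"
      using pmf_count_pmf_0_ge[OF N, of "2 ^ l" f] c by (simp add: p_def x_def)
    moreover have "0 \<le> p" "p \<le> 1" "0 \<le> P (Suc l)" by (simp_all add: p_def pmf_le_1 P_def)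
    ultimately have "P l \<le> (if x < c then (4 * c\<^sup>2 - x\<^sup>2) / 9 else 0)"
      using prob_angle_bound_step[OF x0, of p "P (Suc l)" c] rec True by simp
    then show ?thesis unfolding P_def x_def .
  qed
qed

lemma prob_ac_loop_1_angle_less:
  assumes "0 < c" "c \<le> 2"
  shows "measure_pmf.prob (ac_loop f N 1) {L. 2 ^ L * grover_angle f N < c} \<le> 4 * c\<^sup>2 / 9"
proof -
  have "measure_pmf.prob (ac_loop f N 1) {L. 2 ^ L * grover_angle f N < c}
      \<le> (if 2 ^ 1 * grover_angle f N < c then (4 * c\<^sup>2 - (2 ^ 1 * grover_angle f N)\<^sup>2) / 9 else 0)"
    by (rule prob_ac_loop_angle_less[OF assms])
  also have "\<dots> \<le> 4 * c\<^sup>2 / 9" by simp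
  finally show ?thesis .
qed

lemma expectation_ac_loop_pow2_le:
  "measure_pmf.expectation (ac_loop f N l) (\<lambda>L. (2::real) ^ L)
     \<le> (if (2::real) ^ l < 2 / sin (grover_angle f N) then 12 / sin (grover_angle f N) - 2 ^ l else 2 * 2 ^ l)"
proof (induction "N - l" arbitrary: l rule: less_induct)
  case less
  define s where "s = 1 / sin (grover_angle f N)"
  have s0: "0 < sin (grover_angle f N)" using sin_grover_angle_pos_iff[OF N] t by simp
  then have s1: "1 \<le> s" using sin_le_one[of "grover_angle f N"] by (simp add: s_def)
  have s2: "2 / sin (grover_angle f N) = 2 * s" "12 / sin (grover_angle f N) = 12 * s"
    by (simp_all add: s_def)
  define p where "p = pmf (count_pmf f N (2 ^ l)) 0"
  define E where "E l' = measure_pmf.expectation (ac_loop f N l') (\<lambda>L. (2::real) ^ L)" for l'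
  have rec: "E l = (if (2::real) ^ l < 2 * sqrt (real N) then p * E (Suc l) + (1 - p) * 2 ^ l else 2 ^ l)"
    unfolding E_def p_def by (rule expectation_ac_loop[OF N])
  have "p \<le> 1 / 4" if "2 * s \<le> 2 ^ l"
  proof -
    have "p \<le> 1 / ((2 ^ l)\<^sup>2 * (sin (grover_angle f N))\<^sup>2)"
      using pmf_count_pmf_0_le[OF N, of "2 ^ l" f] t by (simp add: p_def)
    also have "\<dots> \<le> 1 / 4"
    proof -
      have "(2 * s)\<^sup>2 \<le> ((2::real) ^ l)\<^sup>2" using that s1 by (intro power_mono) auto
      then show ?thesis using s0 by (simp add: s_def field_simps power_divide power_mult_distrib)
    qed
    finally show ?thesis .
  qed
  moreover have "E (Suc l) \<le> (if 2 * 2 ^ l < 2 * s then 12 * s - 2 * 2 ^ l else 2 * (2 * 2 ^ l))"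
    if "(2::real) ^ l < 2 * sqrt (real N)"
  proof -
    have "N - Suc l < N - l" using that ac_loop_termination_aux by fastforce
    then show ?thesis using less[of "Suc l"] unfolding E_def s2 power_Suc by simp
  qed
  ultimately have "E l \<le> (if 2 ^ l < 2 * s then 12 * s - 2 ^ l else 2 * 2 ^ l)"
    using expectation_pow2_bound_step[of "2 ^ l" s p "E (Suc l)"] rec s1 by (auto simp: p_def pmf_le_1)
  then show ?case unfolding E_def s2 .
qed

end

lemma set_pmf_ac_loop_no_solution:
  assumes N: "0 < N" and t: "num_sol f N = 0"
  shows "set_pmf (ac_loop f N l)
    = (if (2::real) ^ l < 2 * sqrt (real N) then set_pmf (ac_loop f N (Suc l)) else {l})"
  using set_pmf_count_pmf_no_solution[OF N _ t, of "2 ^ l"]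
  by (subst ac_loop.simps) (simp add: count_est_def)

lemma ac_loop_no_solution_bounds:
  assumes N: "0 < N" and t: "num_sol f N = 0" and L: "L \<in> set_pmf (ac_loop f N l)"
  shows "2 * sqrt (real N) \<le> 2 ^ L \<and> (2::real) ^ L \<le> max (2 ^ l) (4 * sqrt (real N))"
  using L
proof (induction "N - l" arbitrary: l rule: less_induct)
  case less
  show ?case
  proof (cases "(2::real) ^ l < 2 * sqrt (real N)")
    case True
    then have "N - Suc l < N - l" using ac_loop_termination_aux by fastforce
    moreover have "L \<in> set_pmf (ac_loop f N (Suc l))"
      using less.prems True set_pmf_ac_loop_no_solution[OF N t, of l] by simp
    ultimately have "2 * sqrt (real N) \<le> 2 ^ L \<and> (2::real) ^ L \<le> max (2 ^ Suc l) (4 * sqrt (real N))"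
      using less.hyps by blast
    moreover have "(2::real) ^ Suc l \<le> 4 * sqrt (real N)" using True by simp
    ultimately show ?thesis by simp
  next
    case False
    then have "L = l" using less.prems set_pmf_ac_loop_no_solution[OF N t, of l] by simp
    then show ?thesis using False by simp
  qed
qed

section \<open>Approximate counting\<close>

definition count_modulus :: "real \<Rightarrow> nat \<Rightarrow> nat" where
  "count_modulus \<epsilon> l = nat \<lceil>20 * pi\<^sup>2 / \<epsilon> * 2 ^ l\<rceil>"

lemma approx_count_eq_bind:
  "approx_count f N \<epsilon> = bind_pmf (ac_loop f N 1)
     (\<lambda>l. map_pmf (\<lambda>y. (l, count_modulus \<epsilon> l, y)) (count_pmf f N (count_modulus \<epsilon> l)))"
  unfolding approx_count_def Let_def count_modulus_def map_pmf_def ..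

lemma count_modulus_bounds:
  assumes "0 < \<epsilon>"
  shows "20 * pi\<^sup>2 / \<epsilon> * 2 ^ l \<le> real (count_modulus \<epsilon> l)"
    and "real (count_modulus \<epsilon> l) \<le> 20 * pi\<^sup>2 / \<epsilon> * 2 ^ l + 1"
    and "0 < count_modulus \<epsilon> l"
proof -
  have pos: "0 < 20 * pi\<^sup>2 / \<epsilon> * 2 ^ l" using assms by simp
  then have "real (count_modulus \<epsilon> l) = of_int \<lceil>20 * pi\<^sup>2 / \<epsilon> * 2 ^ l\<rceil>"
    by (simp add: count_modulus_def)
  then show "20 * pi\<^sup>2 / \<epsilon> * 2 ^ l \<le> real (count_modulus \<epsilon> l)"
    and "real (count_modulus \<epsilon> l) \<le> 20 * pi\<^sup>2 / \<epsilon> * 2 ^ l + 1"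
    by simp_all
  show "0 < count_modulus \<epsilon> l" using pos by (simp add: count_modulus_def)
qed

context
  fixes f :: "nat \<Rightarrow> bool" and N :: nat and \<epsilon> :: real
  assumes N: "0 < N" and \<epsilon>: "0 < \<epsilon>" "\<epsilon> \<le> 1"
begin

lemma count_est_relative_error:
  assumes "\<bar>pi * real y / real M - grover_angle f N\<bar> \<le> \<epsilon> / 7 * sin (grover_angle f N)"
  shows "\<bar>count_est N M y - real (num_sol f N)\<bar> \<le> \<epsilon> * real (num_sol f N) / 3"
proof -
  have "real (num_sol f N) = real N * (sin (grover_angle f N))\<^sup>2"
    using num_sol_eq_sin_grover_angle[OF N, of f] N by (simp add: power_mult_distrib)
  moreover have "\<bar>real N * (sin (pi * real y / real M))\<^sup>2 - real N * (sin (grover_angle f N))\<^sup>2\<bar>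
      \<le> \<epsilon> * (real N * (sin (grover_angle f N))\<^sup>2) / 3"
    using \<epsilon> assms grover_angle_nonneg[OF N] grover_angle_le[OF N]
    by (intro scaled_sin_sq_relative_error[where \<kappa>="\<epsilon> / 7"]) (auto simp: field_simps)
  ultimately show ?thesis by (simp add: count_est_def)
qed

lemma count_resolution_le:
  assumes "1/4 \<le> 2 ^ l * grover_angle f N"
  shows "pi / real (count_modulus \<epsilon> l) \<le> \<epsilon> / 7 * sin (grover_angle f N)"
proof -
  let ?\<theta> = "grover_angle f N"
  have "?\<theta> / 2 \<le> sin ?\<theta>"
    using grover_angle_nonneg[OF N] grover_angle_le[OF N] by (intro half_le_sin)
  have "pi / real (count_modulus \<epsilon> l) \<le> pi / (20 * pi\<^sup>2 / \<epsilon> * 2 ^ l)"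
    using count_modulus_bounds[OF \<epsilon>(1)] \<epsilon> by (intro divide_left_mono) auto
  also have "\<dots> = \<epsilon> / (20 * pi * 2 ^ l)" using \<epsilon> by (simp add: power2_eq_square field_simps)
  also have "\<dots> \<le> \<epsilon> / (56 * 2 ^ l)" using \<epsilon> pi_gt3 by (intro divide_left_mono mult_right_mono) auto
  also have "\<dots> \<le> \<epsilon> / 14 * ?\<theta>" using assms \<epsilon> by (simp add: field_simps)
  also have "\<dots> \<le> \<epsilon> / 7 * sin ?\<theta>" using \<open>?\<theta> / 2 \<le> sin ?\<theta>\<close> \<epsilon> by (simp add: field_simps)
  finally show ?thesis .
qed

lemma count_modulus_angle_ge:
  assumes angle: "1/4 \<le> 2 ^ l * grover_angle f N"
  shows "1 \<le> real (count_modulus \<epsilon> l) * grover_angle f N / pi" and "4 \<le> real (count_modulus \<epsilon> l)"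
proof -
  let ?M = "real (count_modulus \<epsilon> l)"
  have M: "20 * pi\<^sup>2 / \<epsilon> * 2 ^ l \<le> ?M" by (rule count_modulus_bounds[OF \<epsilon>(1)])
  have "0 < grover_angle f N"
    using angle grover_angle_nonneg[OF N, of f] by (cases "grover_angle f N = 0") auto
  have "pi \<le> 20 * pi\<^sup>2 * (1/4)" using pi_gt3 by (simp add: power2_eq_square)
  also have "\<dots> \<le> 20 * pi\<^sup>2 / \<epsilon> * (2 ^ l * grover_angle f N)"
    using angle \<epsilon> by (intro mult_mono) (auto simp: field_simps)
  also have "\<dots> \<le> ?M * grover_angle f N"
    using M \<open>0 < grover_angle f N\<close> mult_right_mono[OF M, of "grover_angle f N"] by simp
  finally show "1 \<le> ?M * grover_angle f N / pi" by simp
  have "4 \<le> 20 * pi\<^sup>2 * 1" using nine_le_pi_sq by simp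
  also have "\<dots> \<le> 20 * pi\<^sup>2 / \<epsilon> * 2 ^ l"
    using \<epsilon> by (intro mult_mono) (auto simp: field_simps)
  finally show "4 \<le> ?M" using M by simp
qed

lemma prob_count_success_ge:
  assumes rnd: "\<forall>x. \<bar>real_of_int (rnd x) - x\<bar> \<le> 2/3"
    and angle: "1/4 \<le> 2 ^ l * grover_angle f N"
  shows "7/10 \<le> measure_pmf.prob (count_pmf f N (count_modulus \<epsilon> l))
     {y. \<bar>real_of_int (rnd (count_est N (count_modulus \<epsilon> l) y)) - real (num_sol f N)\<bar> \<le> \<epsilon> * real (num_sol f N)}"
    (is "_ \<le> measure_pmf.prob _ ?S")
proof -
  define M where "M = count_modulus \<epsilon> l"
  define x where "x = real M * grover_angle f N / pi"
  define y where "y = nat \<lfloor>x\<rfloor>"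
  have M: "0 < M" using count_modulus_bounds(3)[OF \<epsilon>(1)] by (simp add: M_def)
  have "1 \<le> x" using count_modulus_angle_ge(1)[OF angle] by (simp add: x_def M_def)
  then have y: "1 \<le> y" "real y \<le> x" "x < real y + 1" by (simp_all add: y_def) linarith+
  have "x \<le> real M / 2"
    using grover_angle_le[OF N, of f] M by (simp add: x_def field_simps)
  then have "y + 1 < M" using y count_modulus_angle_ge(2)[OF angle] by (simp add: M_def)
  have near: "z \<in> ?S" if "\<bar>real z - x\<bar> \<le> 1" for z
  proof -
    have "\<bar>pi * real z / real M - grover_angle f N\<bar> = pi / real M * \<bar>real z - x\<bar>"
      using M by (simp add: x_def field_simps abs_mult[symmetric] abs_divide)
    also have "\<dots> \<le> pi / real M" using that M by (intro mult_left_le) auto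
    also have "\<dots> \<le> \<epsilon> / 7 * sin (grover_angle f N)"
      unfolding M_def by (rule count_resolution_le[OF angle])
    finally have "\<bar>count_est N M z - real (num_sol f N)\<bar> \<le> \<epsilon> * real (num_sol f N) / 3"
      by (rule count_est_relative_error)
    from rounding_within_relative_error[OF _ rnd[rule_format] this] \<epsilon> show ?thesis
      by (simp add: M_def)
  qed
  have "{y, y + 1, M - y, M - (y + 1)} \<subseteq> ?S"
  proof -
    have "y \<in> ?S" "y + 1 \<in> ?S" by (rule near; use y in simp)+
    moreover have "M - y \<in> ?S" "M - (y + 1) \<in> ?S"
      using calculation \<open>y + 1 < M\<close> M by (simp_all add: count_est_reflect M_def)
    ultimately show ?thesis by blast
  qed
  then show ?thesis
    using prob_count_pmf_nearest_ge[OF N M _ y(1) \<open>y + 1 < M\<close>] by (simp add: y_def x_def M_def)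
qed

end

lemma prob_approx_count:
  assumes N: "0 < N" and \<epsilon>: "0 < \<epsilon>"
  shows "measure_pmf.prob (approx_count f N \<epsilon>) S = measure_pmf.expectation (ac_loop f N 1)
    (\<lambda>l. measure_pmf.prob (count_pmf f N (count_modulus \<epsilon> l)) {y. (l, count_modulus \<epsilon> l, y) \<in> S})"
  unfolding approx_count_eq_bind
  using finite_set_pmf_ac_loop finite_set_pmf_count_pmf[OF N count_modulus_bounds(3)[OF \<epsilon>]]
  by (subst prob_bind_pmf_finite) (auto simp: vimage_def)

lemma approx_count_success_prob_pos:
  fixes rnd :: "real \<Rightarrow> int"
  assumes rnd: "\<forall>x. \<bar>real_of_int (rnd x) - x\<bar> \<le> 2/3"
    and N: "0 < N" and t: "0 < num_sol f N" and \<epsilon>: "0 < \<epsilon>" "\<epsilon> \<le> 1"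
  shows "2/3 \<le> measure_pmf.prob (approx_count f N \<epsilon>)
         {(l, M, y). \<bar>real_of_int (rnd (count_est N M y)) - real (num_sol f N)\<bar> \<le> \<epsilon> * real (num_sol f N)}"
proof -
  define \<phi> where "\<phi> = (\<lambda>l. measure_pmf.prob (count_pmf f N (count_modulus \<epsilon> l))
     {y. \<bar>real_of_int (rnd (count_est N (count_modulus \<epsilon> l) y)) - real (num_sol f N)\<bar> \<le> \<epsilon> * real (num_sol f N)})"
  define B where "B = {L. 2 ^ L * grover_angle f N < 1/4}"
  have "7/10 * (1 - indicator B l) \<le> \<phi> l" for l
    using prob_count_success_ge[OF N \<epsilon> rnd, of l] by (cases "l \<in> B") (simp_all add: \<phi>_def B_def)
  then have E: "7/10 * (1 - measure_pmf.prob (ac_loop f N 1) B) \<le> measure_pmf.expectation (ac_loop f N 1) \<phi>"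
    by (rule mult_prob_compl_le_expectation[OF finite_set_pmf_ac_loop])
  have "measure_pmf.prob (ac_loop f N 1) B \<le> 1/36"
    using prob_ac_loop_1_angle_less[OF N t, of "1/4"] by (simp add: B_def power2_eq_square)
  then have "2/3 \<le> 7/10 * (1 - measure_pmf.prob (ac_loop f N 1) B)" by simp
  also note E
  finally show ?thesis using prob_approx_count[OF N \<epsilon>(1)] by (simp add: \<phi>_def case_prod_unfold)
qed

lemma set_pmf_approx_count_no_solution:
  assumes N: "0 < N" and t: "num_sol f N = 0" and \<epsilon>: "0 < \<epsilon>"
  shows "set_pmf (approx_count f N \<epsilon>) = (\<lambda>l. (l, count_modulus \<epsilon> l, 0)) ` set_pmf (ac_loop f N 1)"
  using set_pmf_count_pmf_no_solution[OF N count_modulus_bounds(3)[OF \<epsilon>] t]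
  by (auto simp: approx_count_eq_bind set_bind_pmf)

lemma approx_count_no_solution_output:
  fixes rnd :: "real \<Rightarrow> int"
  assumes rnd: "\<forall>x. \<bar>real_of_int (rnd x) - x\<bar> \<le> 2/3"
    and N: "0 < N" and t: "num_sol f N = 0" and \<epsilon>: "0 < \<epsilon>"
    and "(l, M, y) \<in> set_pmf (approx_count f N \<epsilon>)"
  shows "rnd (count_est N M y) = 0"
proof -
  have "\<bar>rnd 0\<bar> < 1" using rnd[rule_format, of 0] by linarith
  then have "rnd 0 = 0" by linarith
  moreover have "y = 0" using assms(5) by (auto simp: set_pmf_approx_count_no_solution[OF N t \<epsilon>])
  ultimately show ?thesis by (simp add: count_est_def)
qed

lemma approx_count_success_prob:
  fixes rnd :: "real \<Rightarrow> int"
  assumes rnd: "\<forall>x. \<bar>real_of_int (rnd x) - x\<bar> \<le> 2/3"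
    and N: "0 < N" and \<epsilon>: "0 < \<epsilon>" "\<epsilon> \<le> 1"
  shows "2/3 \<le> measure_pmf.prob (approx_count f N \<epsilon>)
         {(l, M, y). \<bar>real_of_int (rnd (count_est N M y)) - real (num_sol f N)\<bar> \<le> \<epsilon> * real (num_sol f N)}"
    (is "_ \<le> measure_pmf.prob _ ?S")
proof (cases "num_sol f N = 0")
  case True
  then have "set_pmf (approx_count f N \<epsilon>) \<subseteq> ?S"
    using approx_count_no_solution_output[OF rnd N True \<epsilon>(1)] by fastforce
  then have "measure_pmf.prob (approx_count f N \<epsilon>) ?S = 1"
    by (subst measure_pmf.prob_eq_1) (auto simp: AE_measure_pmf_iff)
  then show ?thesis by simp
qed (use approx_count_success_prob_pos[OF rnd N _ \<epsilon>] in simp)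

definition approx_count_cost :: "real \<Rightarrow> nat \<Rightarrow> real" where
  "approx_count_cost \<epsilon> l = real (\<Sum>k\<in>{1..l}. (2::nat) ^ k) + real (count_modulus \<epsilon> l)"

lemma sum_pow2_le: "real (\<Sum>k\<in>{1..L}. (2::nat) ^ k) \<le> 2 * 2 ^ L"
proof (induction L)
  case (Suc L)
  have "{1..Suc L} = insert (Suc L) {1..L}" by auto
  then show ?case using Suc by simp
qed simp

lemma approx_count_cost_ge:
  "0 < \<epsilon> \<Longrightarrow> 20 * pi\<^sup>2 / \<epsilon> * 2 ^ l \<le> approx_count_cost \<epsilon> l"
  using count_modulus_bounds(1)[of \<epsilon> l] of_nat_0_le_iff[of "\<Sum>k\<in>{1..l}. (2::nat) ^ k"]
  unfolding approx_count_cost_def by linarith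

lemma approx_count_cost_le:
  assumes "0 < \<epsilon>"
  shows "approx_count_cost \<epsilon> l \<le> (2 + 20 * pi\<^sup>2 / \<epsilon>) * 2 ^ l + 1"
  using sum_pow2_le[of l] count_modulus_bounds(2)[OF assms, of l]
  by (simp add: approx_count_cost_def algebra_simps)

lemma expectation_approx_count_evals:
  assumes N: "0 < N" and \<epsilon>: "0 < \<epsilon>"
  shows "measure_pmf.expectation (approx_count f N \<epsilon>) (\<lambda>r. real (ac_evals r))
       = measure_pmf.expectation (ac_loop f N 1) (approx_count_cost \<epsilon>)"
  unfolding approx_count_eq_bind
  using finite_set_pmf_ac_loop finite_set_pmf_count_pmf[OF N count_modulus_bounds(3)[OF \<epsilon>]]
  by (subst expectation_bind_pmf_finite) (auto simp: ac_evals_def approx_count_cost_def[abs_def])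

context
  fixes f :: "nat \<Rightarrow> bool" and N :: nat and \<epsilon> :: real
  assumes N: "0 < N" and t: "0 < num_sol f N" and \<epsilon>: "0 < \<epsilon>" "\<epsilon> \<le> 1"
begin

lemma sqrt_inverse_fraction_num_sol: "sqrt (real N / real (num_sol f N)) = 1 / sin (grover_angle f N)"
  using N by (simp add: sin_grover_angle real_sqrt_divide)

lemma expectation_approx_count_evals_le:
  "measure_pmf.expectation (approx_count f N \<epsilon>) (\<lambda>r. real (ac_evals r))
     \<le> 16 * (3 + 20 * pi\<^sup>2) * (1 / \<epsilon>) * sqrt (real N / real (num_sol f N))"
proof -
  define s where "s = 1 / sin (grover_angle f N)"
  have "0 < sin (grover_angle f N)" using sin_grover_angle_pos_iff[OF N] t by simp
  then have s1: "1 \<le> s" using sin_le_one[of "grover_angle f N"] by (simp add: s_def)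
  have "approx_count_cost \<epsilon> l \<le> (3 + 20 * pi\<^sup>2) / \<epsilon> * 2 ^ l" for l
  proof -
    have "(1::real) \<le> 1 * 2 ^ l" by simp
    also have "\<dots> \<le> 1 / \<epsilon> * 2 ^ l" using \<epsilon> by (intro mult_right_mono) (auto simp: field_simps)
    finally have "(2 + 20 * pi\<^sup>2 / \<epsilon>) * 2 ^ l + 1 \<le> (2 / \<epsilon> + 20 * pi\<^sup>2 / \<epsilon>) * 2 ^ l + 1 / \<epsilon> * 2 ^ l"
      using \<epsilon> by (intro add_mono mult_right_mono) (auto simp: field_simps)
    also have "\<dots> = (3 + 20 * pi\<^sup>2) / \<epsilon> * 2 ^ l" using \<epsilon> by (simp add: field_simps)
    finally show ?thesis using approx_count_cost_le[OF \<epsilon>(1), of l] by linarith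
  qed
  then have "measure_pmf.expectation (ac_loop f N 1) (approx_count_cost \<epsilon>)
      \<le> measure_pmf.expectation (ac_loop f N 1) (\<lambda>l. (3 + 20 * pi\<^sup>2) / \<epsilon> * 2 ^ l)"
    by (intro integral_mono integrable_measure_pmf_finite finite_set_pmf_ac_loop)
  also have "\<dots> = (3 + 20 * pi\<^sup>2) / \<epsilon> * measure_pmf.expectation (ac_loop f N 1) (\<lambda>l. (2::real) ^ l)"
    by simp
  also have "\<dots> \<le> (3 + 20 * pi\<^sup>2) / \<epsilon> * (16 * s)"
  proof -
    have "measure_pmf.expectation (ac_loop f N 1) (\<lambda>l. (2::real) ^ l)
        \<le> (if (2::real) ^ 1 < 2 / sin (grover_angle f N) then 12 / sin (grover_angle f N) - 2 ^ 1 else 2 * 2 ^ 1)"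
      by (rule expectation_ac_loop_pow2_le[OF N t])
    also have "\<dots> \<le> 16 * s" using s1 by (auto simp: s_def field_simps)
    finally show ?thesis using \<epsilon> by (intro mult_left_mono) auto
  qed
  finally show ?thesis
    by (simp add: expectation_approx_count_evals[OF N \<epsilon>(1)] sqrt_inverse_fraction_num_sol s_def)
qed

lemma expectation_approx_count_evals_ge:
  "1 / \<epsilon> * sqrt (real N / real (num_sol f N))
     \<le> measure_pmf.expectation (approx_count f N \<epsilon>) (\<lambda>r. real (ac_evals r))"
proof -
  define \<theta> where "\<theta> = grover_angle f N"
  define B where "B = {L. 2 ^ L * \<theta> < 1}"
  define a where "a = 20 * pi\<^sup>2 / (\<epsilon> * \<theta>)"
  have \<theta>: "0 < \<theta>" "\<theta> / 2 \<le> sin \<theta>"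
    using grover_angle_pos_iff[OF N] t half_le_sin[OF grover_angle_nonneg[OF N] grover_angle_le[OF N]]
    by (simp_all add: \<theta>_def)
  have "a * (1 - indicator B l) \<le> approx_count_cost \<epsilon> l" for l
  proof (cases "l \<in> B")
    case False
    then have "a \<le> 20 * pi\<^sup>2 / \<epsilon> * 2 ^ l"
      using \<theta> \<epsilon> by (simp add: B_def a_def field_simps)
    then show ?thesis using False approx_count_cost_ge[OF \<epsilon>(1), of l] by simp
  qed (simp add: approx_count_cost_def sum_nonneg)
  then have "a * (1 - measure_pmf.prob (ac_loop f N 1) B)
      \<le> measure_pmf.expectation (ac_loop f N 1) (approx_count_cost \<epsilon>)"
    by (rule mult_prob_compl_le_expectation[OF finite_set_pmf_ac_loop])
  moreover have "measure_pmf.prob (ac_loop f N 1) B \<le> 4/9"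
    using prob_ac_loop_1_angle_less[OF N t, of 1] by (simp add: B_def \<theta>_def)
  moreover have "0 \<le> a" using \<epsilon> \<theta> by (simp add: a_def)
  ultimately have "a * (5/9) \<le> measure_pmf.expectation (ac_loop f N 1) (approx_count_cost \<epsilon>)"
    using mult_left_mono[of "5/9" "1 - measure_pmf.prob (ac_loop f N 1) B" a] by linarith
  moreover have "1 / \<epsilon> * (1 / sin \<theta>) \<le> a * (5/9)"
  proof -
    have "1 / \<epsilon> * (1 / sin \<theta>) \<le> 1 / \<epsilon> * (2 / \<theta>)"
      using \<theta> \<epsilon> by (intro mult_left_mono) (auto simp: field_simps)
    also have "\<dots> \<le> a * (5/9)"
      using nine_le_pi_sq \<theta> \<epsilon> by (simp add: a_def field_simps)
    finally show ?thesis .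
  qed
  ultimately show ?thesis
    by (simp add: expectation_approx_count_evals[OF N \<epsilon>(1)] sqrt_inverse_fraction_num_sol \<theta>_def)
qed

end

lemma approx_count_no_solution_evals:
  assumes N: "0 < N" and t: "num_sol f N = 0" and \<epsilon>: "0 < \<epsilon>" "\<epsilon> \<le> 1"
    and r: "r \<in> set_pmf (approx_count f N \<epsilon>)"
  shows "sqrt (real N) \<le> real (ac_evals r) \<and> real (ac_evals r) \<le> (4 * (2 + 20 * pi\<^sup>2 / \<epsilon>) + 1) * sqrt (real N)"
proof -
  obtain l where l: "l \<in> set_pmf (ac_loop f N 1)" and r: "r = (l, count_modulus \<epsilon> l, 0)"
    using r unfolding set_pmf_approx_count_no_solution[OF N t \<epsilon>(1)] by auto
  have evals: "real (ac_evals r) = approx_count_cost \<epsilon> l"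
    by (simp add: r ac_evals_def approx_count_cost_def)
  have N1: "1 \<le> sqrt (real N)" using N by simp
  have l_bounds: "2 * sqrt (real N) \<le> 2 ^ l" "(2::real) ^ l \<le> 4 * sqrt (real N)"
    using ac_loop_no_solution_bounds[OF N t l] N1 by auto
  have "sqrt (real N) \<le> 1 * 2 ^ l" using l_bounds N1 by simp
  also have "\<dots> \<le> 20 * pi\<^sup>2 / \<epsilon> * 2 ^ l"
    using nine_le_pi_sq \<epsilon> by (intro mult_right_mono) (auto simp: field_simps)
  also have "\<dots> \<le> approx_count_cost \<epsilon> l" by (rule approx_count_cost_ge[OF \<epsilon>(1)])
  finally have lower: "sqrt (real N) \<le> approx_count_cost \<epsilon> l" .
  have "approx_count_cost \<epsilon> l \<le> (2 + 20 * pi\<^sup>2 / \<epsilon>) * 2 ^ l + 1"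
    by (rule approx_count_cost_le[OF \<epsilon>(1)])
  also have "\<dots> \<le> (2 + 20 * pi\<^sup>2 / \<epsilon>) * (4 * sqrt (real N)) + 1 * sqrt (real N)"
    using l_bounds N1 \<epsilon> by (intro add_mono mult_left_mono) auto
  finally show ?thesis using lower evals by (simp add: algebra_simps)
qed

theorem theorem8:
  fixes rnd :: "real \<Rightarrow> int"
  assumes rnd: "\<forall>x. \<bar>real_of_int (rnd x) - x\<bar> \<le> 2/3"
  shows
   "(\<forall>N f \<epsilon>. N \<ge> 1 \<and> 0 < \<epsilon> \<and> \<epsilon> \<le> 1 \<longrightarrow>
       measure_pmf.prob (approx_count f N \<epsilon>)
         {(l, M, y). \<bar>real_of_int (rnd (count_est N M y)) - real (num_sol f N)\<bar>
                       \<le> \<epsilon> * real (num_sol f N)} \<ge> 2/3)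
  \<and> (\<exists>c1 c2. 0 < c1 \<and> 0 < c2 \<and>
       (\<forall>N f \<epsilon>. N \<ge> 1 \<and> 0 < \<epsilon> \<and> \<epsilon> \<le> 1 \<and> num_sol f N > 0 \<longrightarrow>
          c1 * (1 / \<epsilon>) * sqrt (real N / real (num_sol f N))
            \<le> measure_pmf.expectation (approx_count f N \<epsilon>) (\<lambda>r. real (ac_evals r))
        \<and> measure_pmf.expectation (approx_count f N \<epsilon>) (\<lambda>r. real (ac_evals r))
            \<le> c2 * (1 / \<epsilon>) * sqrt (real N / real (num_sol f N))))
  \<and> (\<forall>N f \<epsilon>. N \<ge> 1 \<and> 0 < \<epsilon> \<and> \<epsilon> \<le> 1 \<and> num_sol f N = 0 \<longrightarrow>
       (\<forall>(l, M, y) \<in> set_pmf (approx_count f N \<epsilon>). rnd (count_est N M y) = 0))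
  \<and> (\<forall>\<epsilon>. 0 < \<epsilon> \<and> \<epsilon> \<le> 1 \<longrightarrow>
       (\<exists>c1 c2. 0 < c1 \<and> 0 < c2 \<and>
         (\<forall>N f. N \<ge> 1 \<and> num_sol f N = 0 \<longrightarrow>
            (\<forall>r \<in> set_pmf (approx_count f N \<epsilon>).
               c1 * sqrt (real N) \<le> real (ac_evals r) \<and> real (ac_evals r) \<le> c2 * sqrt (real N)))))"
  apply (intro conjI)
  subgoal using approx_count_success_prob[OF rnd] by simp
  subgoal
    using expectation_approx_count_evals_ge expectation_approx_count_evals_le
    by (intro exI[of _ 1] exI[of _ "16 * (3 + 20 * pi\<^sup>2)"]) (simp add: add_pos_nonneg)
  subgoal using approx_count_no_solution_output[OF rnd] by fastforce
  subgoal
    apply (intro allI impI)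
    subgoal for \<epsilon>
      using approx_count_no_solution_evals[where \<epsilon> = \<epsilon>]
      by (intro exI[of _ 1] exI[of _ "4 * (2 + 20 * pi\<^sup>2 / \<epsilon>) + 1"]) (auto simp: add_pos_nonneg)
    done
  done

end
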